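(* For $j\in\{1,2\}$, $$\sum_{\{U,W\}\in\mathsf P_j}\chi^{\mathsf u_{\rm id},\mathsf v_{\rm id}}=(-\Psi)^{1-N}\sum_{D\in\mathcal D^0}(-2)^{c_2^j(D)-1}\prod_{(a,b)\text{ chord of }D}\chi^{a,b},$$ where $(\mathsf u_{\rm id},\mathsf v_{\rm id})$ is the representative of $\{U,W\}$.
   Context: Graph polynomials. All graphs are finite, may have multiple edges and self-loops, and each edge $e$ has a fixed direction from $\partial_-(e)$ to $\partial_+(e)$. Each edge $e$ carries a variable $\alpha_e$; for $S\subseteq E_G$ put $\alpha_S=\prod_{e\in S}\alpha_e$. $h_1(G)$ is the first Betti number. The Kirchhoff polynomial of a connected graph is $\Psi_G=\sum_T\alpha_{E_G\setminus T}$, summed over spanning trees $T$; for a disconnected graph it is the product over its components. $G/\!\!/S$ denotes contraction of all edges of $S$. A simple cycle $C$ is a connected subgraph in which every vertex has degree $2$; fix one of its two cyclic orientations and set $o_C(e)=+1$ if $e\in C$ is directed along it, $-1$ if against it, and $0$ if $e\notin C$. For $e,f\in E_G$ the cycle polynomial is $\chi_G^{e,f}=\sum_C o_C(e)o_C(f)\Psi_{G/\!\!/C}$, summed over all simple cycles $C$. For words $\mathsf u=u_1\cdots u_k$ and $\mathsf v=v_1\cdots v_k$ whose letters are edges of $G$, with $1\le k\le h_1(G)$, the Dodgson cycle polynomial is $\chi_G^{\mathsf u,\mathsf v}=\Psi_G^{1-k}\sum_{\sigma\in S_k}\operatorname{sgn}(\sigma)\prod_{i=1}^k\chi_G^{u_i,v_{\sigma(i)}}=\Psi_G^{1-k}\det(\chi_G^{u_i,v_j})_{i,j}$.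 Chord diagrams. Let $\Gamma$ be a connected graph with $N:=h_1(\Gamma)\ge1$, and write $\Psi=\Psi_\Gamma$, $\chi^{e,f}=\chi_\Gamma^{e,f}$, $\chi^{\mathsf u,\mathsf v}=\chi_\Gamma^{\mathsf u,\mathsf v}$. Let $D_0$ be a chord diagram without chords: a disjoint union of $\ell\ge1$ cycles (base cycles) of lengths $2n_1,\dots,2n_\ell$, with $n_i\ge1$ and $\sum n_i=N$. A base cycle of length $2$ consists of two parallel edges. Its edges (base edges) are coloured $1$ and $2$ alternately along each base cycle, so every vertex meets exactly one base edge of each colour. Its $2N$ vertices are labelled by pairwise distinct edges of $\Gamma$; $e_w$ denotes the label of vertex $w$. Let $E^1$ and $E^2$ be the sets of base edges of colour $1$ and $2$; each is a perfect matching of $V(D_0)$. A chord is an extra edge (colour $0$) joining two distinct vertices. $\mathcal D^0$ is the set of diagrams obtained from $D_0$ by adding $N$ chords forming a perfect matching of $V(D_0)$. For $D\in\mathcal D^0$ and $j\in\{1,2\}$, $c_2^j(D)$ is the number of connected components that are cycles in the subgraph formed by all chords and all colour-$j$ base edges (a chord parallel to a colour-$j$ base edge counts as a cycle of length $2$). For a chord $(a,b)$ write $\chi^{a,b}:=\chi^{e_a,e_b}$. Words. For $j\in\{1,2\}$, $\mathsf P_j$ is the set of unordered pairs $\{U,W\}$ of disjoint sets with $U\cup W=V(D_0)$ and $|U|=|W|=N$, such that every colour-$j$ base edge has one endpoint in $U$ and one in $W$. Fix an enumeration $(a_1,b_1),\dots,(a_N,b_N)$ of $E^j$. The representative of $\{U,W\}\in\mathsf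 P_j$ is the pair of words $(\mathsf u_{\rm id},\mathsf v_{\rm id})$ of length $N$ whose $k$-th letters are $e_{a_k}$ and $e_{b_k}$: the letter whose vertex lies in $U$ goes into $\mathsf u_{\rm id}$ and the other into $\mathsf v_{\rm id}$. *)

theory Defs
  imports Complex_Main "HOL-Combinatorics.Permutations"
begin

text \<open>A graph is given by a vertex set V, an edge set E and a map ends assigning to each
edge e the pair (tail, head) = (source, target). Multiple edges and self-loops are allowed.\<close>

definition conn :: "('e \<Rightarrow> 'v \<times> 'v) \<Rightarrow> 'e set \<Rightarrow> ('v \<times> 'v) set" where
  "conn ends F = (\<Union>e\<in>F. {ends e, prod.swap (ends e)})\<^sup>*"

definition vrel :: "'v set \<Rightarrow> ('e \<Rightarrow> 'v \<times> 'v) \<Rightarrow> 'e set \<Rightarrow> ('v \<times> 'v) set" where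
  "vrel V ends F = conn ends F \<inter> (V \<times> V)"

definition components :: "'v set \<Rightarrow> 'e set \<Rightarrow> ('e \<Rightarrow> 'v \<times> 'v) \<Rightarrow> 'v set set" where
  "components V E ends = V // vrel V ends E"

definition is_forest :: "('e \<Rightarrow> 'v \<times> 'v) \<Rightarrow> 'e set \<Rightarrow> bool" where
  "is_forest ends F \<longleftrightarrow> (\<forall>e\<in>F. ends e \<notin> conn ends (F - {e}))"

text \<open>spanning trees of the component K (edges of K are those with tail in K)\<close>
definition spanning_trees_comp :: "'e set \<Rightarrow> ('e \<Rightarrow> 'v \<times> 'v) \<Rightarrow> 'v set \<Rightarrow> 'e set set" where
  "spanning_trees_comp E ends K =
     {T. T \<subseteq> {e\<in>E. fst (ends e) \<in> K} \<and> is_forest ends T \<and> (\<forall>x\<in>K. \<forall>y\<in>K. (x, y) \<in> conn ends T)}"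

definition kirchhoff :: "'v set \<Rightarrow> 'e set \<Rightarrow> ('e \<Rightarrow> 'v \<times> 'v) \<Rightarrow> ('e \<Rightarrow> real) \<Rightarrow> real" where
  "kirchhoff V E ends \<alpha> =
     (\<Prod>K\<in>components V E ends.
        \<Sum>T\<in>spanning_trees_comp E ends K. \<Prod>e\<in>{e\<in>E. fst (ends e) \<in> K} - T. \<alpha> e)"

definition betti1 :: "'v set \<Rightarrow> 'e set \<Rightarrow> ('e \<Rightarrow> 'v \<times> 'v) \<Rightarrow> nat" where
  "betti1 V E ends = card E + card (components V E ends) - card V"

definition graph_connected :: "'v set \<Rightarrow> 'e set \<Rightarrow> ('e \<Rightarrow> 'v \<times> 'v) \<Rightarrow> bool" where
  "graph_connected V E ends \<longleftrightarrow> V \<noteq> {} \<and> (\<forall>x\<in>V. \<forall>y\<in>V. (x, y) \<in> conn ends E)"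

definition contr_V :: "'v set \<Rightarrow> ('e \<Rightarrow> 'v \<times> 'v) \<Rightarrow> 'e set \<Rightarrow> 'v set set" where
  "contr_V V ends S = V // vrel V ends S"

definition contr_ends :: "'v set \<Rightarrow> ('e \<Rightarrow> 'v \<times> 'v) \<Rightarrow> 'e set \<Rightarrow> 'e \<Rightarrow> 'v set \<times> 'v set" where
  "contr_ends V ends S e =
     (vrel V ends S `` {fst (ends e)}, vrel V ends S `` {snd (ends e)})"

definition kirchhoff_contr :: "'v set \<Rightarrow> 'e set \<Rightarrow> ('e \<Rightarrow> 'v \<times> 'v) \<Rightarrow> 'e set \<Rightarrow> ('e \<Rightarrow> real) \<Rightarrow> real" where
  "kirchhoff_contr V E ends S \<alpha> = kirchhoff (contr_V V ends S) (E - S) (contr_ends V ends S) \<alpha>"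

text \<open>simple cycles: nonempty connected edge sets in which every vertex has degree 2
  (a self-loop contributes 2 to the degree)\<close>
definition cverts :: "('e \<Rightarrow> 'v \<times> 'v) \<Rightarrow> 'e set \<Rightarrow> 'v set" where
  "cverts ends C = fst ` ends ` C \<union> snd ` ends ` C"

definition degree :: "('e \<Rightarrow> 'v \<times> 'v) \<Rightarrow> 'e set \<Rightarrow> 'v \<Rightarrow> nat" where
  "degree ends C v = card {e\<in>C. fst (ends e) = v} + card {e\<in>C. snd (ends e) = v}"

definition is_simple_cycle :: "'e set \<Rightarrow> ('e \<Rightarrow> 'v \<times> 'v) \<Rightarrow> 'e set \<Rightarrow> bool" where
  "is_simple_cycle E ends C \<longleftrightarrow> C \<subseteq> E \<and> C \<noteq> {} \<and>
     (\<forall>x\<in>cverts ends C. \<forall>y\<in>cverts ends C. (x, y) \<in> conn ends C) \<and>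
     (\<forall>v\<in>cverts ends C. degree ends C v = 2)"

text \<open>a cyclic orientation of C: signs +1/-1 on C (0 off C) such that traversal is
  consistent, i.e. the signed incidence sums vanish at every vertex\<close>
definition is_cyc_orientation :: "('e \<Rightarrow> 'v \<times> 'v) \<Rightarrow> 'e set \<Rightarrow> ('e \<Rightarrow> int) \<Rightarrow> bool" where
  "is_cyc_orientation ends C sg \<longleftrightarrow>
     (\<forall>e. e \<notin> C \<longrightarrow> sg e = 0) \<and> (\<forall>e\<in>C. sg e = 1 \<or> sg e = -1) \<and>
     (\<forall>v. (\<Sum>e\<in>C. sg e * ((if snd (ends e) = v then 1 else 0) - (if fst (ends e) = v then 1 else 0))) = 0)"

definition orient :: "('e \<Rightarrow> 'v \<times> 'v) \<Rightarrow> 'e set \<Rightarrow> 'e \<Rightarrow> int" where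
  "orient ends C = (SOME sg. is_cyc_orientation ends C sg)"

definition cycpoly :: "'v set \<Rightarrow> 'e set \<Rightarrow> ('e \<Rightarrow> 'v \<times> 'v) \<Rightarrow> ('e \<Rightarrow> real) \<Rightarrow> 'e \<Rightarrow> 'e \<Rightarrow> real" where
  "cycpoly V E ends \<alpha> e f =
     (\<Sum>C\<in>{C. is_simple_cycle E ends C}.
        of_int (orient ends C e * orient ends C f) * kirchhoff_contr V E ends C \<alpha>)"

definition dodgson :: "'v set \<Rightarrow> 'e set \<Rightarrow> ('e \<Rightarrow> 'v \<times> 'v) \<Rightarrow> ('e \<Rightarrow> real) \<Rightarrow> 'e list \<Rightarrow> 'e list \<Rightarrow> real" where
  "dodgson V E ends \<alpha> us vs =
     kirchhoff V E ends \<alpha> powi (1 - int (length us)) *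
     (\<Sum>\<sigma>\<in>{\<sigma>. \<sigma> permutes {..<length us}}.
        of_int (sign \<sigma>) * (\<Prod>i<length us. cycpoly V E ends \<alpha> (us ! i) (vs ! \<sigma> i)))"

text \<open>Chord diagrams. Vertex set W; perfect matchings are partitions into 2-element sets.\<close>
definition perfect_matching :: "'w set \<Rightarrow> 'w set set \<Rightarrow> bool" where
  "perfect_matching W M \<longleftrightarrow> (\<forall>p\<in>M. p \<subseteq> W \<and> card p = 2) \<and> (\<forall>w\<in>W. \<exists>!p. p \<in> M \<and> w \<in> p)"

definition cm_degree :: "'w set set \<Rightarrow> 'w set set \<Rightarrow> 'w \<Rightarrow> nat" where
  "cm_degree P M v = card {p\<in>P. v \<in> p} + card {q\<in>M. v \<in> q}"

definition cm_rel :: "'w set \<Rightarrow> 'w set set \<Rightarrow> 'w set set \<Rightarrow> ('w \<times> 'w) set" where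
  "cm_rel W P M = {(x, y). \<exists>p\<in>P \<union> M. x \<in> p \<and> y \<in> p}\<^sup>* \<inter> (W \<times> W)"

definition c2 :: "'w set \<Rightarrow> 'w set set \<Rightarrow> 'w set set \<Rightarrow> nat" where
  "c2 W P M = card {K\<in>W // cm_rel W P M. \<forall>v\<in>K. cm_degree P M v = 2}"

definition chord_chi :: "'v set \<Rightarrow> 'e set \<Rightarrow> ('e \<Rightarrow> 'v \<times> 'v) \<Rightarrow> ('e \<Rightarrow> real) \<Rightarrow> ('w \<Rightarrow> 'e) \<Rightarrow> 'w set \<Rightarrow> real" where
  "chord_chi V E ends \<alpha> lab p =
     (let ab = (SOME ab. p = {fst ab, snd ab} \<and> fst ab \<noteq> snd ab)
      in cycpoly V E ends \<alpha> (lab (fst ab)) (lab (snd ab)))"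

definition splits :: "'w set \<Rightarrow> 'w set set \<Rightarrow> nat \<Rightarrow> 'w set set set" where
  "splits W M N = {{U, U'} | U U'. U \<inter> U' = {} \<and> U \<union> U' = W \<and> card U = N \<and> card U' = N \<and>
      (\<forall>p\<in>M. card (p \<inter> U) = 1 \<and> card (p \<inter> U') = 1)}"

text \<open>representative words of a pair S = {U, U'} (with U chosen from S) w.r.t. an
  enumeration of the colour-j edges\<close>
definition rep_u :: "('w \<Rightarrow> 'e) \<Rightarrow> ('w \<times> 'w) list \<Rightarrow> 'w set set \<Rightarrow> 'e list" where
  "rep_u lab enum S = (let U = (SOME U. U \<in> S) in
      map (\<lambda>(a, b). if a \<in> U then lab a else lab b) enum)"

definition rep_v :: "('w \<Rightarrow> 'e) \<Rightarrow> ('w \<times> 'w) list \<Rightarrow> 'w set set \<Rightarrow> 'e list" where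
  "rep_v lab enum S = (let U = (SOME U. U \<in> S) in
      map (\<lambda>(a, b). if a \<in> U then lab b else lab a) enum)"

end

theory Submission
  imports Defs
begin

(* Fix an enumeration of the colour-j pairs. Choosing one endpoint of every pair amounts to a set T
   of flipped positions, and T and its complement give the same split; since \<chi> is symmetric they also
   give the same determinant, so the left-hand side is half of the sum over all T of
   det (\<chi>(u_T i, v_T k)). Expanding the determinants, a term (T, \<sigma>) joins u_T i to v_T (\<sigma> i), and these
   chords form a chord diagram D. The signed number of terms producing D is
   2 (-1)^(N-1) (-2)^(c_2(D)-1), by induction along the enumeration: for the last pair {a, b} either
   {a, b} is a chord of D, which then has two orientations and closes one cycle, or the chords {a, x}
   and {b, y} of D are merged into {x, y} by composing \<sigma> with a transposition, which reverses the
   sign and keeps the number of cycles. *)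

lemma perfect_matchingI:
  assumes "\<And>p. p \<in> P \<Longrightarrow> p \<subseteq> W" "\<And>p. p \<in> P \<Longrightarrow> card p = 2" "\<And>w. w \<in> W \<Longrightarrow> \<exists>p\<in>P. w \<in> p"
    "\<And>p q w. p \<in> P \<Longrightarrow> q \<in> P \<Longrightarrow> w \<in> p \<Longrightarrow> w \<in> q \<Longrightarrow> p = q"
  shows "perfect_matching W P"
  using assms unfolding perfect_matching_def by blast

lemma perfect_matching_subset: "perfect_matching W P \<Longrightarrow> p \<in> P \<Longrightarrow> p \<subseteq> W"
  unfolding perfect_matching_def by blast

lemma perfect_matching_card: "perfect_matching W P \<Longrightarrow> p \<in> P \<Longrightarrow> card p = 2"
  unfolding perfect_matching_def by blast

lemma perfect_matching_cover: "perfect_matching W P \<Longrightarrow> w \<in> W \<Longrightarrow> \<exists>p\<in>P. w \<in> p"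
  unfolding perfect_matching_def by blast

lemma perfect_matching_unique:
  "perfect_matching W P \<Longrightarrow> p \<in> P \<Longrightarrow> q \<in> P \<Longrightarrow> w \<in> p \<Longrightarrow> w \<in> q \<Longrightarrow> p = q"
  unfolding perfect_matching_def by (metis subsetD)

lemma perfect_matching_partner:
  assumes "perfect_matching W P" "w \<in> W"
  obtains z where "{w, z} \<in> P" "z \<noteq> w"
proof -
  obtain p where p: "p \<in> P" "w \<in> p" using perfect_matching_cover[OF assms] by blast
  have "card p = 2" using perfect_matching_card[OF assms(1) p(1)] .
  then obtain u v where "p = {u, v}" "u \<noteq> v" by (auto simp: card_2_iff)
  then show ?thesis using that p by (auto simp: insert_commute)
qed

lemma perfect_matching_finite:
  assumes "finite W" shows "finite {P. perfect_matching W P}"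
  by (rule finite_subset[of _ "Pow (Pow W)"]) (use assms perfect_matching_subset in auto)

lemma card_perfect_matching_at:
  assumes "perfect_matching W P" "v \<in> W"
  shows "card {p\<in>P. v \<in> p} = 1"
proof -
  obtain p where p: "p \<in> P" "v \<in> p" using perfect_matching_cover[OF assms] by blast
  then have "{p\<in>P. v \<in> p} = {p}" using perfect_matching_unique[OF assms(1)] by blast
  then show ?thesis by simp
qed

subsection \<open>Counting components\<close>

definition pairs_adj :: "'w set set \<Rightarrow> ('w \<times> 'w) set" where
  "pairs_adj E = {(x, y). \<exists>p\<in>E. x \<in> p \<and> y \<in> p}"

lemma pairs_adjI: "p \<in> E \<Longrightarrow> x \<in> p \<Longrightarrow> y \<in> p \<Longrightarrow> (x, y) \<in> pairs_adj E"
  by (auto simp: pairs_adj_def)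

lemma cm_rel_eq_pairs_adj: "cm_rel W P M = (pairs_adj (P \<union> M))\<^sup>* \<inter> W \<times> W"
  by (simp add: cm_rel_def pairs_adj_def)

lemma equiv_pairs_conn:
  assumes "\<forall>p\<in>E. p \<subseteq> W"
  shows "equiv W ((pairs_adj E)\<^sup>* \<inter> W \<times> W)"
proof (rule equivI)
  have "sym ((pairs_adj E)\<^sup>*)"
    by (rule sym_rtrancl) (auto simp: sym_def pairs_adj_def)
  then show "sym ((pairs_adj E)\<^sup>* \<inter> W \<times> W)" by (auto simp: sym_def)
qed (auto simp: refl_on_def trans_def)

lemma pairs_conn_closed:
  assumes "\<forall>p\<in>E. p \<subseteq> A" "(u, v) \<in> (pairs_adj E)\<^sup>*" "u \<in> A"
  shows "v \<in> A"
  using assms(2,3) by (induction rule: rtrancl_induct) (use assms(1) in \<open>auto simp: pairs_adj_def\<close>)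

lemma card_quotient_restrict:
  assumes eq: "equiv W R" and sub: "W' \<subseteq> W"
    and cov: "\<forall>w\<in>W. \<exists>w'\<in>W'. (w, w') \<in> R"
  shows "card (W // R) = card (W' // (R \<inter> W' \<times> W'))"
proof -
  define R' where "R' = R \<inter> W' \<times> W'"
  have cls: "R' `` {w} = R `` {w} \<inter> W'" if "w \<in> W'" for w using that by (auto simp: R'_def)
  have rep: "\<exists>w'\<in>W'. K = R `` {w'}" if "K \<in> W // R" for K
  proof -
    obtain w where w: "w \<in> W" "K = R `` {w}" using \<open>K \<in> W // R\<close> by (auto elim: quotientE)
    obtain w' where "w' \<in> W'" "(w, w') \<in> R" using cov w(1) by blast
    then show ?thesis using w eq by (metis equiv_class_eq)
  qed
  have "bij_betw (\<lambda>K. K \<inter> W') (W // R) (W' // R')"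
  proof (rule bij_betw_imageI)
    show "inj_on (\<lambda>K. K \<inter> W') (W // R)"
    proof (rule inj_onI)
      fix K1 K2 assume K: "K1 \<in> W // R" "K2 \<in> W // R" and e: "K1 \<inter> W' = K2 \<inter> W'"
      obtain w1 where w1: "w1 \<in> W'" "K1 = R `` {w1}" using rep[OF K(1)] by blast
      obtain w2 where w2: "w2 \<in> W'" "K2 = R `` {w2}" using rep[OF K(2)] by blast
      have "w1 \<in> K1 \<inter> W'" using w1 sub equiv_class_self[OF eq] by auto
      then have "w1 \<in> K2" using e by auto
      then show "K1 = K2" using w1 w2 equiv_class_eq[OF eq, of w2 w1] by auto
    qed
    show "(\<lambda>K. K \<inter> W') ` (W // R) = W' // R'"
    proof
      show "(\<lambda>K. K \<inter> W') ` (W // R) \<subseteq> W' // R'"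
      proof
        fix K' assume "K' \<in> (\<lambda>K. K \<inter> W') ` (W // R)"
        then obtain K where "K \<in> W // R" "K' = K \<inter> W'" by blast
        then obtain w' where "w' \<in> W'" "K' = R' `` {w'}" using rep cls by metis
        then show "K' \<in> W' // R'" by (auto intro: quotientI)
      qed
      show "W' // R' \<subseteq> (\<lambda>K. K \<inter> W') ` (W // R)"
      proof
        fix K' assume "K' \<in> W' // R'"
        then obtain w' where w': "w' \<in> W'" "K' = R' `` {w'}" by (auto elim: quotientE)
        then have "K' = R `` {w'} \<inter> W'" using cls by auto
        moreover have "R `` {w'} \<in> W // R" using w' sub by (auto intro: quotientI)
        ultimately show "K' \<in> (\<lambda>K. K \<inter> W') ` (W // R)" by blast
      qed
    qed
  qed
  then show ?thesis unfolding R'_def by (rule bij_betw_same_card)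
qed

lemma pairs_conn_insert_pair:
  assumes E'W: "\<forall>p\<in>E'. p \<subseteq> W'" and ab: "a \<notin> W'" "b \<notin> W'"
    and uv: "(u, v) \<in> (pairs_adj (insert {a, b} E'))\<^sup>*"
  shows "(u \<in> W' \<longrightarrow> (u, v) \<in> (pairs_adj E')\<^sup>*) \<and> (u \<in> {a, b} \<longrightarrow> v \<in> {a, b})"
  using uv
proof (induction rule: rtrancl_induct)
  case (step v z)
  then obtain p where p: "p \<in> insert {a, b} E'" "v \<in> p" "z \<in> p" by (auto simp: pairs_adj_def)
  show ?case
  proof (cases "p = {a, b}")
    case True
    then show ?thesis using step p ab pairs_conn_closed[OF E'W] by blast
  next
    case False
    then have "p \<in> E'" using p by auto
    then show ?thesis using step p ab E'W by (auto intro: rtrancl_into_rtrancl pairs_adjI)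
  qed
qed simp

lemma card_components_insert_pair:
  assumes E'W: "\<forall>p\<in>E'. p \<subseteq> W'" and ab: "a \<notin> W'" "b \<notin> W'" "a \<noteq> b" and fin: "finite W'"
  defines "W \<equiv> insert a (insert b W')" and "E \<equiv> insert {a, b} E'"
  shows "card (W // ((pairs_adj E)\<^sup>* \<inter> W \<times> W)) = Suc (card (W' // ((pairs_adj E')\<^sup>* \<inter> W' \<times> W')))"
proof -
  define R where "R = (pairs_adj E)\<^sup>* \<inter> W \<times> W"
  define R' where "R' = (pairs_adj E')\<^sup>* \<inter> W' \<times> W'"
  have eq: "equiv W R" unfolding R_def by (rule equiv_pairs_conn) (use E'W in \<open>auto simp: W_def E_def\<close>)
  have mono: "(pairs_adj E')\<^sup>* \<subseteq> (pairs_adj E)\<^sup>*"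
    by (rule rtrancl_mono) (auto simp: pairs_adj_def E_def)
  have old: "R `` {w} = R' `` {w}" if "w \<in> W'" for w
    using pairs_conn_insert_pair[OF E'W ab(1,2), folded E_def] pairs_conn_closed[OF E'W _ that] mono that
    by (auto simp: R_def R'_def W_def)
  have ab_adj: "(a, b) \<in> pairs_adj E" by (auto simp: pairs_adj_def E_def)
  have "R `` {a} = {a, b}"
  proof
    show "R `` {a} \<subseteq> {a, b}" using pairs_conn_insert_pair[OF E'W ab(1,2), folded E_def] by (auto simp: R_def)
    show "{a, b} \<subseteq> R `` {a}" using ab_adj by (auto simp: R_def W_def)
  qed
  moreover have "R `` {b} = R `` {a}"
    using ab_adj eq by (intro equiv_class_eq[OF eq]) (auto simp: R_def W_def equiv_def sym_def)
  ultimately have "W // R = insert {a, b} (W' // R')"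
    unfolding quotient_def W_def using old by auto
  moreover have "{a, b} \<notin> W' // R'"
  proof
    assume "{a, b} \<in> W' // R'"
    then have "{a, b} \<subseteq> W'" by (auto simp: R'_def elim!: quotientE)
    then show False using ab by auto
  qed
  moreover have "finite (W' // R')" using fin by (rule finite_quotient) (auto simp: R'_def)
  ultimately show ?thesis by (simp add: R_def R'_def)
qed

text \<open>Replacing a path \<open>x - a - b - y\<close> through the two points \<open>a, b\<close> by the single pair
  \<open>{x, y}\<close> does not change the number of components.\<close>

lemma pairs_conn_shortcut:
  assumes E'W: "\<forall>p\<in>E'. p \<subseteq> W'" and ab: "a \<notin> W'" "b \<notin> W'" and xy: "{x, y} \<in> E'"
    and EE': "E \<subseteq> E' \<union> {{a, b}, {a, x}, {b, y}}"
    and uv: "(u, v) \<in> (pairs_adj E)\<^sup>*" and u: "u \<in> W'"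
  shows "(v \<in> W' \<longrightarrow> (u, v) \<in> (pairs_adj E')\<^sup>*) \<and> (v \<in> {a, b} \<longrightarrow> (u, x) \<in> (pairs_adj E')\<^sup>*)"
  using uv
proof (induction rule: rtrancl_induct)
  case base then show ?case using u ab by auto
next
  case (step v z)
  then obtain p where p: "p \<in> E" "v \<in> p" "z \<in> p" by (auto simp: pairs_adj_def)
  have xy_adj: "(x, y) \<in> pairs_adj E'" "(y, x) \<in> pairs_adj E'" using xy by (auto simp: pairs_adj_def)
  have xyW: "x \<in> W'" "y \<in> W'" using xy E'W by auto
  have "p \<in> E' \<or> p = {a, b} \<or> p = {a, x} \<or> p = {b, y}" using p EE' by auto
  then show ?case
  proof (elim disjE)
    assume "p \<in> E'"
    then show ?thesis using step p ab E'W by (auto intro: rtrancl_into_rtrancl pairs_adjI)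
  next
    assume "p = {b, y}"
    then show ?thesis using step p ab xyW xy_adj by (auto intro: rtrancl_into_rtrancl)
  qed (use step p ab xyW in auto)
qed

lemma card_components_shortcut:
  assumes E'W: "\<forall>p\<in>E'. p \<subseteq> W'" and ab: "a \<notin> W'" "b \<notin> W'" and xy: "{x, y} \<in> E'"
    and EE': "E \<subseteq> E' \<union> {{a, b}, {a, x}, {b, y}}"
    and path: "{a, b} \<in> E" "{a, x} \<in> E" "{b, y} \<in> E"
    and E'E: "\<forall>p\<in>E'. p \<in> E \<or> p = {x, y}"
  defines "W \<equiv> insert a (insert b W')"
  shows "card (W // ((pairs_adj E)\<^sup>* \<inter> W \<times> W)) = card (W' // ((pairs_adj E')\<^sup>* \<inter> W' \<times> W'))"
proof -
  have xyW: "x \<in> W'" "y \<in> W'" using xy E'W by auto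
  have eq: "equiv W ((pairs_adj E)\<^sup>* \<inter> W \<times> W)"
    by (rule equiv_pairs_conn) (use E'W EE' xyW in \<open>auto simp: W_def\<close>)
  have path_adj: "(a, x) \<in> pairs_adj E" "(b, y) \<in> pairs_adj E" "(a, b) \<in> pairs_adj E"
    "(b, a) \<in> pairs_adj E" "(x, a) \<in> pairs_adj E" "(y, b) \<in> pairs_adj E"
    using path by (auto simp: pairs_adj_def)
  have "pairs_adj E' \<subseteq> (pairs_adj E)\<^sup>*"
  proof
    fix q assume "q \<in> pairs_adj E'"
    then obtain v z p where q: "q = (v, z)" "p \<in> E'" "v \<in> p" "z \<in> p" by (auto simp: pairs_adj_def)
    show "q \<in> (pairs_adj E)\<^sup>*"
    proof (cases "p \<in> E")
      case False
      then have "p = {x, y}" using E'E q by auto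
      moreover have "(x, y) \<in> (pairs_adj E)\<^sup>*" "(y, x) \<in> (pairs_adj E)\<^sup>*"
        using path_adj by (meson rtrancl.rtrancl_into_rtrancl r_into_rtrancl)+
      ultimately show ?thesis using q by auto
    qed (use q in \<open>auto simp: pairs_adj_def\<close>)
  qed
  then have mono: "(pairs_adj E')\<^sup>* \<subseteq> (pairs_adj E)\<^sup>*" by (rule rtrancl_subset_rtrancl)
  have "(pairs_adj E)\<^sup>* \<inter> W \<times> W \<inter> W' \<times> W' = (pairs_adj E')\<^sup>* \<inter> W' \<times> W'"
    using mono pairs_conn_shortcut[OF E'W ab xy EE'] by (auto simp: W_def)
  then show ?thesis
    using card_quotient_restrict[OF eq, of W'] path_adj xyW by (auto simp: W_def)
qed

text \<open>For two perfect matchings every vertex has degree 2, so every component counts.\<close>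

lemma c2_perfect_matchings:
  assumes "perfect_matching W P" "perfect_matching W M"
  shows "c2 W P M = card (W // ((pairs_adj (P \<union> M))\<^sup>* \<inter> W \<times> W))"
proof -
  have eq: "equiv W (cm_rel W P M)" unfolding cm_rel_eq_pairs_adj
    by (rule equiv_pairs_conn) (use assms in \<open>auto simp: perfect_matching_def\<close>)
  have "cm_degree P M v = 2" if "K \<in> W // cm_rel W P M" "v \<in> K" for K v
  proof -
    have "v \<in> W" using that eq in_quotient_imp_subset by blast
    then show ?thesis
      using card_perfect_matching_at[OF assms(1)] card_perfect_matching_at[OF assms(2)]
      by (simp add: cm_degree_def)
  qed
  then have "{K\<in>W // cm_rel W P M. \<forall>v\<in>K. cm_degree P M v = 2} = W // cm_rel W P M" by blast
  then show ?thesis by (simp add: c2_def cm_rel_eq_pairs_adj)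
qed

definition endpoints :: "('w \<times> 'w) list \<Rightarrow> 'w set" where
  "endpoints en = fst ` set en \<union> snd ` set en"

definition pair_sets :: "('w \<times> 'w) list \<Rightarrow> 'w set set" where
  "pair_sets en = (\<lambda>(a, b). {a, b}) ` set en"

definition distinct_endpoints :: "('w \<times> 'w) list \<Rightarrow> bool" where
  "distinct_endpoints en \<longleftrightarrow> distinct (map fst en @ map snd en)"

text \<open>A set \<open>T\<close> of positions encodes a choice of one endpoint of every listed pair: at positions
  in \<open>T\<close> the second component goes into the first word, elsewhere the first one does.\<close>

definition uend :: "('w \<times> 'w) list \<Rightarrow> nat set \<Rightarrow> nat \<Rightarrow> 'w" where
  "uend en T i = (if i \<in> T then snd (en ! i) else fst (en ! i))"

definition vend :: "('w \<times> 'w) list \<Rightarrow> nat set \<Rightarrow> nat \<Rightarrow> 'w" where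
  "vend en T i = (if i \<in> T then fst (en ! i) else snd (en ! i))"

lemma distinct_endpointsD:
  assumes "distinct_endpoints en" "i < length en" "j < length en"
  shows "fst (en ! i) = fst (en ! j) \<longleftrightarrow> i = j" and "snd (en ! i) = snd (en ! j) \<longleftrightarrow> i = j"
    and "fst (en ! i) \<noteq> snd (en ! j)"
proof -
  have d: "distinct (map fst en)" "distinct (map snd en)" "set (map fst en) \<inter> set (map snd en) = {}"
    using assms(1) by (simp_all add: distinct_endpoints_def)
  show "fst (en ! i) = fst (en ! j) \<longleftrightarrow> i = j"
    using nth_eq_iff_index_eq[OF d(1)] assms(2,3) by auto
  show "snd (en ! i) = snd (en ! j) \<longleftrightarrow> i = j"
    using nth_eq_iff_index_eq[OF d(2)] assms(2,3) by auto
  show "fst (en ! i) \<noteq> snd (en ! j)"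
    using d(3) nth_mem[OF assms(2)] nth_mem[OF assms(3)] by force
qed

lemma uend_eq_iff:
  assumes "distinct_endpoints en" "i < length en" "j < length en"
  shows "uend en T i = uend en T j \<longleftrightarrow> i = j"
  using distinct_endpointsD[OF assms] distinct_endpointsD(3)[OF assms(1,3,2)]
  by (auto simp: uend_def)

lemma vend_eq_iff:
  assumes "distinct_endpoints en" "i < length en" "j < length en"
  shows "vend en T i = vend en T j \<longleftrightarrow> i = j"
  using distinct_endpointsD[OF assms] distinct_endpointsD(3)[OF assms(1,3,2)]
  by (auto simp: vend_def)

lemma uend_neq_vend:
  assumes "distinct_endpoints en" "i < length en" "j < length en"
  shows "uend en T i \<noteq> vend en T j"
  using distinct_endpointsD[OF assms] distinct_endpointsD(3)[OF assms(1,3,2)]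
  by (auto simp: uend_def vend_def)

lemma uend_in_endpoints: "i < length en \<Longrightarrow> uend en T i \<in> endpoints en"
  unfolding uend_def endpoints_def by auto

lemma vend_in_endpoints: "i < length en \<Longrightarrow> vend en T i \<in> endpoints en"
  unfolding vend_def endpoints_def by auto

lemma endpoints_uend_vend:
  assumes "w \<in> endpoints en"
  obtains i where "i < length en" "w = uend en T i \<or> w = vend en T i"
proof -
  obtain i where "i < length en" "w = fst (en ! i) \<or> w = snd (en ! i)"
    using assms unfolding endpoints_def by (auto simp: in_set_conv_nth)
  then show ?thesis using that unfolding uend_def vend_def by (cases "i \<in> T") auto
qed

lemma finite_endpoints: "finite (endpoints en)"
  by (simp add: endpoints_def)

lemma distinct_endpoints_snoc:
  "distinct_endpoints (en @ [(a, b)]) \<longleftrightarrow>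
     distinct_endpoints en \<and> a \<noteq> b \<and> a \<notin> endpoints en \<and> b \<notin> endpoints en"
  by (auto simp: distinct_endpoints_def endpoints_def)

lemma endpoints_snoc: "endpoints (en @ [(a, b)]) = insert a (insert b (endpoints en))"
  unfolding endpoints_def by auto

lemma pair_sets_snoc: "pair_sets (en @ [(a, b)]) = insert {a, b} (pair_sets en)"
  unfolding pair_sets_def by auto

lemma pair_sets_conv_nth: "pair_sets en = (\<lambda>i. {fst (en ! i), snd (en ! i)}) ` {..<length en}"
proof -
  have "set en = (\<lambda>i. en ! i) ` {..<length en}"
    by (metis atLeast0LessThan list.set_map map_nth set_upt)
  then show ?thesis by (simp add: pair_sets_def image_image case_prod_beta)
qed

lemma uend_snoc: "i < length en \<Longrightarrow> uend (en @ [ab]) T i = uend en T i"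
  unfolding uend_def by (simp add: nth_append)

lemma vend_snoc: "i < length en \<Longrightarrow> vend (en @ [ab]) T i = vend en T i"
  unfolding vend_def by (simp add: nth_append)

lemma uend_last: "uend (en @ [(a, b)]) T (length en) = (if length en \<in> T then b else a)"
  unfolding uend_def by simp

lemma vend_last: "vend (en @ [(a, b)]) T (length en) = (if length en \<in> T then a else b)"
  unfolding vend_def by simp

lemma uend_insert_other: "i \<noteq> n \<Longrightarrow> uend en (insert n T) i = uend en T i"
  and uend_remove_other: "i \<noteq> n \<Longrightarrow> uend en (T - {n}) i = uend en T i"
  and vend_insert_other: "i \<noteq> n \<Longrightarrow> vend en (insert n T) i = vend en T i"
  and vend_remove_other: "i \<noteq> n \<Longrightarrow> vend en (T - {n}) i = vend en T i"
  unfolding uend_def vend_def by simp_all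

lemma perfect_matching_pair_sets:
  assumes "distinct_endpoints en"
  shows "perfect_matching (endpoints en) (pair_sets en)"
proof (rule perfect_matchingI)
  fix p assume "p \<in> pair_sets en"
  then obtain i where i: "i < length en" "p = {fst (en ! i), snd (en ! i)}"
    by (auto simp: pair_sets_def in_set_conv_nth)
  then show "p \<subseteq> endpoints en" by (auto simp: endpoints_def)
  show "card p = 2" using i distinct_endpointsD(3)[OF assms i(1) i(1)] by simp
next
  fix w assume "w \<in> endpoints en"
  then show "\<exists>p\<in>pair_sets en. w \<in> p" by (force simp: endpoints_def pair_sets_def)
next
  fix p q w assume pq: "p \<in> pair_sets en" "q \<in> pair_sets en" "w \<in> p" "w \<in> q"
  obtain i where i: "i < length en" "p = {fst (en ! i), snd (en ! i)}"
    using pq(1) by (auto simp: pair_sets_def in_set_conv_nth)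
  obtain j where j: "j < length en" "q = {fst (en ! j), snd (en ! j)}"
    using pq(2) by (auto simp: pair_sets_def in_set_conv_nth)
  have "i = j"
    using pq(3,4) i j distinct_endpointsD[OF assms i(1) j(1)] distinct_endpointsD(3)[OF assms j(1) i(1)]
    by auto
  then show "p = q" using i j by simp
qed

lemma card_endpoints:
  assumes "distinct_endpoints en"
  shows "card (endpoints en) = 2 * length en"
proof -
  have "endpoints en = set (map fst en @ map snd en)" by (auto simp: endpoints_def)
  also have "card \<dots> = length (map fst en @ map snd en)"
    using assms by (simp only: distinct_endpoints_def distinct_card)
  finally show ?thesis by simp
qed

subsection \<open>Signed count of the terms with a given chord diagram\<close>

text \<open>A pair \<open>(T, \<sigma>)\<close> indexes one term of the expansion of \<open>\<Sum>\<^sub>T det (\<chi>(uend T i, vend T j))\<^sub>i\<^sub>j\<close>;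
  its chords \<open>{uend T i, vend T (\<sigma> i)}\<close> form a perfect matching, and \<open>chord_terms en P\<close> collects the
  terms producing the chord diagram \<open>P\<close>.\<close>

definition chord_terms :: "('w \<times> 'w) list \<Rightarrow> 'w set set \<Rightarrow> (nat set \<times> (nat \<Rightarrow> nat)) set" where
  "chord_terms en P = {(T, \<sigma>). T \<subseteq> {..<length en} \<and> \<sigma> permutes {..<length en} \<and>
      (\<forall>i<length en. {uend en T i, vend en T (\<sigma> i)} \<in> P)}"

definition chord_weight :: "nat \<Rightarrow> nat \<Rightarrow> real" where
  "chord_weight n c = 2 * (-1) powi (int n - 1) * (-2) powi (int c - 1)"

lemma chord_weight_Suc_Suc: "chord_weight (Suc n) (Suc c) = 2 * chord_weight n c"
  by (simp add: chord_weight_def power_int_diff)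

lemma chord_weight_Suc: "chord_weight (Suc n) c = - chord_weight n c"
  by (simp add: chord_weight_def power_int_diff)

lemma chord_terms_iff:
  "(T, \<sigma>) \<in> chord_terms en P \<longleftrightarrow> T \<subseteq> {..<length en} \<and> \<sigma> permutes {..<length en} \<and>
      (\<forall>i<length en. {uend en T i, vend en T (\<sigma> i)} \<in> P)"
  by (simp add: chord_terms_def)

lemma permutes_lessThan: "\<sigma> permutes {..<m} \<Longrightarrow> i < m \<Longrightarrow> \<sigma> i < m"
  using permutes_in_image by fastforce

lemma chord_eq_iff:
  assumes "distinct_endpoints en" "\<sigma> permutes {..<length en}" "i < length en" "j < length en"
  shows "{uend en T i, vend en T (\<sigma> i)} = {uend en T j, vend en T (\<sigma> j)} \<longleftrightarrow> i = j"
  using uend_eq_iff[OF assms(1,3,4)] uend_neq_vend[OF assms(1,3) permutes_lessThan[OF assms(2,4)]]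
  by (auto simp: doubleton_eq_iff)

lemma endpoints_in_chord:
  assumes "\<sigma> permutes {..<length en}" "w \<in> endpoints en"
  obtains i where "i < length en" "w \<in> {uend en T i, vend en T (\<sigma> i)}"
proof -
  obtain i where i: "i < length en" "w = uend en T i \<or> w = vend en T i"
    using endpoints_uend_vend[OF assms(2)] by blast
  show ?thesis
  proof (cases "w = uend en T i")
    case False
    then have "w = vend en T (\<sigma> (inv \<sigma> i))" using i permutes_inverses(1)[OF assms(1)] by simp
    moreover have "inv \<sigma> i < length en" using permutes_lessThan[OF permutes_inv[OF assms(1)] i(1)] .
    ultimately show ?thesis using that by blast
  qed (use that i in blast)
qed

lemma chord_terms_snoc_chord_fixes_last:
  assumes distinct: "distinct_endpoints (en @ [(a, b)])"
    and matching: "perfect_matching (endpoints (en @ [(a, b)])) P" and chord: "{a, b} \<in> P"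
    and member: "(T, \<sigma>) \<in> chord_terms (en @ [(a, b)]) P"
  shows "\<sigma> (length en) = length en"
proof (rule ccontr)
  define n where "n = length en"
  have perm: "\<sigma> permutes {..<Suc n}"
    and chord_n: "{uend (en @ [(a, b)]) T n, vend (en @ [(a, b)]) T (\<sigma> n)} \<in> P"
    using member by (auto simp: chord_terms_iff n_def)
  assume "\<sigma> (length en) \<noteq> length en"
  then have "\<sigma> n < n" using permutes_lessThan[OF perm, of n] by (simp add: n_def)
  then have "vend (en @ [(a, b)]) T (\<sigma> n) \<notin> {a, b}"
    using distinct vend_in_endpoints[of "\<sigma> n" en] by (auto simp: n_def vend_snoc distinct_endpoints_snoc)
  moreover have "uend (en @ [(a, b)]) T n \<in> {a, b}" by (simp add: n_def uend_last)
  ultimately show False using perfect_matching_unique[OF matching chord_n chord] by auto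
qed

lemma chord_terms_snoc_chord:
  assumes distinct: "distinct_endpoints (en @ [(a, b)])"
    and matching: "perfect_matching (endpoints (en @ [(a, b)])) P" and chord: "{a, b} \<in> P"
  shows "(T, \<sigma>) \<in> chord_terms (en @ [(a, b)]) P \<longleftrightarrow>
    T \<subseteq> {..<Suc (length en)} \<and> (T - {length en}, \<sigma>) \<in> chord_terms en (P - {{a, b}})"
    (is "?lhs \<longleftrightarrow> ?rhs")
proof
  define n where "n = length en"
  have fresh: "a \<notin> endpoints en" "b \<notin> endpoints en"
    using distinct by (simp_all add: distinct_endpoints_snoc)
  have old_chord: "{uend en (T - {n}) i, vend en (T - {n}) (\<sigma> i)} \<in> P - {{a, b}}
      \<longleftrightarrow> {uend (en @ [(a, b)]) T i, vend (en @ [(a, b)]) T (\<sigma> i)} \<in> P"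
    if "i < n" "\<sigma> i < n" for i
    using that fresh uend_in_endpoints[of i en] vend_in_endpoints[of "\<sigma> i" en]
    by (auto simp: n_def uend_snoc vend_snoc uend_remove_other vend_remove_other doubleton_eq_iff)
  {
    assume ?lhs
    then have T: "T \<subseteq> {..<Suc n}" and perm: "\<sigma> permutes {..<Suc n}"
      and chords: "\<And>i. i < Suc n \<Longrightarrow> {uend (en @ [(a, b)]) T i, vend (en @ [(a, b)]) T (\<sigma> i)} \<in> P"
      by (auto simp: chord_terms_iff n_def)
    have "\<sigma> n = n" using chord_terms_snoc_chord_fixes_last[OF assms \<open>?lhs\<close>] by (simp add: n_def)
    then have perm': "\<sigma> permutes {..<n}" by (intro permutes_superset[OF perm]) auto
    show ?rhs
      using T perm' chords old_chord permutes_lessThan[OF perm']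
      by (auto simp: chord_terms_iff n_def[symmetric])
  next
    assume ?rhs
    then have T: "T \<subseteq> {..<Suc n}" and perm': "\<sigma> permutes {..<n}"
      and chords: "\<And>i. i < n \<Longrightarrow> {uend en (T - {n}) i, vend en (T - {n}) (\<sigma> i)} \<in> P - {{a, b}}"
      by (auto simp: chord_terms_iff n_def)
    have "\<sigma> n = n" using perm' by (simp add: permutes_not_in)
    then have "{uend (en @ [(a, b)]) T n, vend (en @ [(a, b)]) T (\<sigma> n)} = {a, b}"
      by (auto simp: n_def uend_last vend_last)
    then have "{uend (en @ [(a, b)]) T i, vend (en @ [(a, b)]) T (\<sigma> i)} \<in> P" if "i < Suc n" for i
      using that chord chords old_chord permutes_lessThan[OF perm'] by (cases "i = n") auto
    moreover have "\<sigma> permutes {..<Suc n}" using perm' by (rule permutes_subset) auto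
    ultimately show ?lhs using T by (simp add: chord_terms_iff n_def)
  }
qed

text \<open>Each term for the shorter list extends in two ways, according to the orientation of the
  new chord.\<close>

lemma chord_terms_snoc_chord_image:
  assumes "distinct_endpoints (en @ [(a, b)])"
    and "perfect_matching (endpoints (en @ [(a, b)])) P" and "{a, b} \<in> P"
  shows "chord_terms (en @ [(a, b)]) P
       = (\<lambda>((T, \<sigma>), \<beta>). (if \<beta> then insert (length en) T else T, \<sigma>)) ` (chord_terms en (P - {{a, b}}) \<times> UNIV)"
    (is "_ = ?extend ` (?C \<times> UNIV)")
proof (intro equalityI subsetI)
  fix z assume "z \<in> chord_terms (en @ [(a, b)]) P"
  moreover obtain T \<sigma> where z: "z = (T, \<sigma>)" by (cases z)
  ultimately have "(T - {length en}, \<sigma>) \<in> ?C" "z = ?extend ((T - {length en}, \<sigma>), length en \<in> T)"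
    using chord_terms_snoc_chord[OF assms] by auto
  then show "z \<in> ?extend ` (?C \<times> UNIV)" by blast
next
  fix z assume "z \<in> ?extend ` (?C \<times> UNIV)"
  then obtain T \<sigma> \<beta> where "(T, \<sigma>) \<in> ?C" "z = ?extend ((T, \<sigma>), \<beta>)" by auto
  moreover have T: "T \<subseteq> {..<length en}" using \<open>(T, \<sigma>) \<in> ?C\<close> by (simp add: chord_terms_iff)
  moreover from T have "insert (length en) T - {length en} = T" "T - {length en} = T" by auto
  ultimately show "z \<in> chord_terms (en @ [(a, b)]) P"
    using chord_terms_snoc_chord[OF assms] by auto
qed

lemma sum_sign_snoc_chord:
  assumes "distinct_endpoints (en @ [(a, b)])"
    and "perfect_matching (endpoints (en @ [(a, b)])) P" and "{a, b} \<in> P"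
  shows "(\<Sum>z\<in>chord_terms (en @ [(a, b)]) P. real_of_int (sign (snd z)))
       = 2 * (\<Sum>z\<in>chord_terms en (P - {{a, b}}). real_of_int (sign (snd z)))"
proof -
  define C where "C = chord_terms en (P - {{a, b}})"
  define extend :: "(nat set \<times> (nat \<Rightarrow> nat)) \<times> bool \<Rightarrow> nat set \<times> (nat \<Rightarrow> nat)" where
    "extend = (\<lambda>((T, \<sigma>), \<beta>). (if \<beta> then insert (length en) T else T, \<sigma>))"
  have "inj_on extend (C \<times> UNIV)"
  proof (rule inj_on_inverseI)
    fix z assume "z \<in> C \<times> (UNIV :: bool set)"
    then show "(\<lambda>(T, \<sigma>). ((T - {length en}, \<sigma>), length en \<in> T)) (extend z) = z"
      by (auto simp: extend_def C_def chord_terms_iff split: prod.splits)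
  qed
  then have "(\<Sum>z\<in>chord_terms (en @ [(a, b)]) P. real_of_int (sign (snd z)))
      = (\<Sum>z\<in>C \<times> UNIV. real_of_int (sign (snd (extend z))))"
    using sum.reindex chord_terms_snoc_chord_image[OF assms] by (simp add: comp_def C_def extend_def)
  also have "\<dots> = (\<Sum>z\<in>C \<times> (UNIV :: bool set). real_of_int (sign (snd (fst z))))"
    by (simp add: extend_def split_def)
  also have "\<dots> = (\<Sum>z\<in>C. \<Sum>\<beta>\<in>(UNIV :: bool set). real_of_int (sign (snd z)))"
    using sum.cartesian_product[where g="\<lambda>z \<beta>. real_of_int (sign (snd z))" and A=C and B="UNIV :: bool set"]
    by (simp add: split_def)
  also have "\<dots> = 2 * (\<Sum>z\<in>C. real_of_int (sign (snd z)))"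
    by (simp add: UNIV_bool sum_distrib_left)
  finally show ?thesis by (simp add: C_def)
qed

lemma perfect_matching_remove_chord:
  assumes distinct: "distinct_endpoints (en @ [(a, b)])"
    and matching: "perfect_matching (endpoints (en @ [(a, b)])) P" and chord: "{a, b} \<in> P"
  shows "perfect_matching (endpoints en) (P - {{a, b}})"
proof (rule perfect_matchingI)
  have fresh: "a \<notin> endpoints en" "b \<notin> endpoints en"
    using distinct by (simp_all add: distinct_endpoints_snoc)
  fix p assume p: "p \<in> P - {{a, b}}"
  then have "a \<notin> p" "b \<notin> p" using perfect_matching_unique[OF matching _ chord] by blast+
  then show "p \<subseteq> endpoints en"
    using perfect_matching_subset[OF matching] p by (auto simp: endpoints_snoc)
  show "card p = 2" using perfect_matching_card[OF matching] p by auto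
next
  fix w assume w: "w \<in> endpoints en"
  then obtain p where "p \<in> P" "w \<in> p"
    using perfect_matching_cover[OF matching] by (auto simp: endpoints_snoc)
  moreover have "w \<notin> {a, b}" using w distinct by (auto simp: distinct_endpoints_snoc)
  ultimately show "\<exists>p\<in>P - {{a, b}}. w \<in> p" by blast
qed (use perfect_matching_unique[OF matching] in blast)

lemma c2_snoc_chord:
  assumes distinct: "distinct_endpoints (en @ [(a, b)])"
    and matching: "perfect_matching (endpoints (en @ [(a, b)])) P" and chord: "{a, b} \<in> P"
  shows "c2 (endpoints (en @ [(a, b)])) P (pair_sets (en @ [(a, b)]))
       = Suc (c2 (endpoints en) (P - {{a, b}}) (pair_sets en))"
proof -
  have fresh: "distinct_endpoints en" "a \<noteq> b" "a \<notin> endpoints en" "b \<notin> endpoints en"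
    using distinct by (simp_all add: distinct_endpoints_snoc)
  have matching': "perfect_matching (endpoints en) (P - {{a, b}})"
    by (rule perfect_matching_remove_chord[OF assms])
  have "P \<union> pair_sets (en @ [(a, b)]) = insert {a, b} ((P - {{a, b}}) \<union> pair_sets en)"
    using chord by (auto simp: pair_sets_snoc)
  moreover have "\<forall>p\<in>(P - {{a, b}}) \<union> pair_sets en. p \<subseteq> endpoints en"
    using perfect_matching_subset[OF matching'] perfect_matching_subset[OF perfect_matching_pair_sets[OF fresh(1)]]
    by blast
  ultimately show ?thesis
    using card_components_insert_pair[OF _ fresh(3,4,2) finite_endpoints]
      c2_perfect_matchings[OF matching perfect_matching_pair_sets[OF distinct]]
      c2_perfect_matchings[OF matching' perfect_matching_pair_sets[OF fresh(1)]]
    by (simp add: endpoints_snoc)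
qed

text \<open>The chords \<open>{a, x}\<close> and \<open>{b, y}\<close> through the last pair are merged into \<open>{x, y}\<close>; on the terms
  this is a sign-reversing bijection, while the number of cycles is unchanged.\<close>

locale chord_merge =
  fixes en :: "('w \<times> 'w) list" and a b x y :: 'w and P :: "'w set set"
  assumes distinct: "distinct_endpoints (en @ [(a, b)])"
    and matching: "perfect_matching (endpoints (en @ [(a, b)])) P"
    and no_chord: "{a, b} \<notin> P"
    and chord_a: "{a, x} \<in> P" "x \<noteq> a" and chord_b: "{b, y} \<in> P" "y \<noteq> b"
begin

abbreviation "n \<equiv> length en"
abbreviation "en_ab \<equiv> en @ [(a, b)]"

definition merged :: "'w set set" where
  "merged = insert {x, y} (P - {{a, x}, {b, y}})"

lemma fresh: "distinct_endpoints en" "a \<noteq> b" "a \<notin> endpoints en" "b \<notin> endpoints en"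
  using distinct by (simp_all add: distinct_endpoints_snoc)

lemma chord_at_a: "p \<in> P \<Longrightarrow> a \<in> p \<Longrightarrow> p = {a, x}"
  and chord_at_b: "p \<in> P \<Longrightarrow> b \<in> p \<Longrightarrow> p = {b, y}"
  and chord_at_x: "p \<in> P \<Longrightarrow> x \<in> p \<Longrightarrow> p = {a, x}"
  and chord_at_y: "p \<in> P \<Longrightarrow> y \<in> p \<Longrightarrow> p = {b, y}"
  using perfect_matching_unique[OF matching _ chord_a(1)] perfect_matching_unique[OF matching _ chord_b(1)]
  by auto

lemma x_neq_b: "x \<noteq> b" and y_neq_a: "y \<noteq> a"
  using chord_a no_chord chord_b by (auto simp: insert_commute)

lemma x_in_endpoints: "x \<in> endpoints en" and y_in_endpoints: "y \<in> endpoints en"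
  using perfect_matching_subset[OF matching chord_a(1)] perfect_matching_subset[OF matching chord_b(1)]
    chord_a(2) chord_b(2) x_neq_b y_neq_a
  by (auto simp: endpoints_snoc)

lemma x_neq_y: "x \<noteq> y"
  using chord_at_y[OF chord_a(1)] fresh(2) chord_a(2) x_neq_b by (auto simp: doubleton_eq_iff)

lemma merged_pair: "p \<in> merged \<Longrightarrow> p \<subseteq> endpoints en \<and> card p = 2"
proof (cases "p = {x, y}")
  case False
  assume p: "p \<in> merged"
  then have "p \<in> P" "p \<noteq> {a, x}" "p \<noteq> {b, y}" using False by (auto simp: merged_def)
  moreover have "p \<subseteq> insert a (insert b (endpoints en))"
    using perfect_matching_subset[OF matching \<open>p \<in> P\<close>] by (simp add: endpoints_snoc)
  ultimately show ?thesis using chord_at_a chord_at_b perfect_matching_card[OF matching] by blast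
qed (use x_in_endpoints y_in_endpoints x_neq_y in auto)

lemma perfect_matching_merged: "perfect_matching (endpoints en) merged"
proof (rule perfect_matchingI)
  show "p \<subseteq> endpoints en" "card p = 2" if "p \<in> merged" for p using merged_pair[OF that] by auto
next
  fix w assume w: "w \<in> endpoints en"
  show "\<exists>p\<in>merged. w \<in> p"
  proof (cases "w \<in> {x, y}")
    case False
    obtain p where "p \<in> P" "w \<in> p"
      using perfect_matching_cover[OF matching] w by (auto simp: endpoints_snoc)
    moreover have "w \<noteq> a" "w \<noteq> b" using w fresh by auto
    ultimately show ?thesis using False by (auto simp: merged_def)
  qed (auto simp: merged_def)
next
  fix p q w assume pq: "p \<in> merged" "q \<in> merged" "w \<in> p" "w \<in> q"
  have avoid: "w \<notin> r" if "r \<in> merged" "r \<noteq> {x, y}" "w \<in> {x, y}" for r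
    using that chord_at_x chord_at_y by (auto simp: merged_def)
  show "p = q"
  proof (cases "p = {x, y} \<or> q = {x, y}")
    case True
    then show ?thesis using avoid pq by blast
  next
    case False
    then have "p \<in> P" "q \<in> P" using pq(1,2) by (auto simp: merged_def)
    then show ?thesis using perfect_matching_unique[OF matching] pq(3,4) by blast
  qed
qed

lemma c2_merged:
  "c2 (endpoints en_ab) P (pair_sets en_ab) = c2 (endpoints en) merged (pair_sets en)"
proof -
  have pairs: "perfect_matching (endpoints en) (pair_sets en)"
    by (rule perfect_matching_pair_sets[OF fresh(1)])
  have "card (insert a (insert b (endpoints en)) // ((pairs_adj (P \<union> pair_sets en_ab))\<^sup>* \<inter>
          insert a (insert b (endpoints en)) \<times> insert a (insert b (endpoints en))))
      = card (endpoints en // ((pairs_adj (merged \<union> pair_sets en))\<^sup>* \<inter> endpoints en \<times> endpoints en))"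
  proof (rule card_components_shortcut)
    show "\<forall>p\<in>merged \<union> pair_sets en. p \<subseteq> endpoints en"
      using perfect_matching_subset[OF perfect_matching_merged] perfect_matching_subset[OF pairs] by blast
    show "P \<union> pair_sets en_ab \<subseteq> merged \<union> pair_sets en \<union> {{a, b}, {a, x}, {b, y}}"
      by (auto simp: merged_def pair_sets_snoc)
    show "\<forall>p\<in>merged \<union> pair_sets en. p \<in> P \<union> pair_sets en_ab \<or> p = {x, y}"
      by (auto simp: merged_def pair_sets_snoc)
  qed (use fresh chord_a(1) chord_b(1) in \<open>simp_all add: merged_def pair_sets_snoc\<close>)
  then show ?thesis
    using c2_perfect_matchings[OF matching perfect_matching_pair_sets[OF distinct]]
      c2_perfect_matchings[OF perfect_matching_merged pairs]
    by (simp add: endpoints_snoc)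
qed

lemma chord_terms_last:
  assumes "(T, \<sigma>) \<in> chord_terms en_ab P"
  shows "\<sigma> n < n" "inv \<sigma> n < n" "\<sigma> (inv \<sigma> n) = n"
    and "vend en T (\<sigma> n) = (if n \<in> T then y else x)" "uend en T (inv \<sigma> n) = (if n \<in> T then x else y)"
proof -
  have perm: "\<sigma> permutes {..<Suc n}"
    and chords: "\<And>i. i < Suc n \<Longrightarrow> {uend en_ab T i, vend en_ab T (\<sigma> i)} \<in> P"
    using assms by (auto simp: chord_terms_iff)
  show inv: "\<sigma> (inv \<sigma> n) = n" using permutes_inverses(1)[OF perm] .
  have "\<sigma> n \<noteq> n"
    using chords[of n] no_chord by (cases "n \<in> T") (auto simp: uend_last vend_last insert_commute)
  then show k: "\<sigma> n < n" using permutes_lessThan[OF perm, of n] by simp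
  have "inv \<sigma> n \<noteq> n" using inv \<open>\<sigma> n \<noteq> n\<close> by auto
  then show i: "inv \<sigma> n < n" using permutes_lessThan[OF permutes_inv[OF perm], of n] by simp
  have at_n: "{uend en_ab T n, vend en T (\<sigma> n)} \<in> P"
    using chords[of n] vend_snoc[OF k] by simp
  have at_i: "{uend en T (inv \<sigma> n), vend en_ab T n} \<in> P"
    using chords[of "inv \<sigma> n"] i inv uend_snoc[OF i] by simp
  have old: "vend en T (\<sigma> n) \<in> endpoints en" "uend en T (inv \<sigma> n) \<in> endpoints en"
    using vend_in_endpoints[OF k] uend_in_endpoints[OF i] .
  show "vend en T (\<sigma> n) = (if n \<in> T then y else x)"
    using chord_at_a[OF at_n] chord_at_b[OF at_n] old fresh
    by (auto simp: uend_last doubleton_eq_iff)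
  show "uend en T (inv \<sigma> n) = (if n \<in> T then x else y)"
    using chord_at_a[OF at_i] chord_at_b[OF at_i] old fresh
    by (auto simp: vend_last doubleton_eq_iff)
qed

text \<open>Composing with a transposition makes the last position a fixed point.\<close>

definition drop_last :: "nat set \<times> (nat \<Rightarrow> nat) \<Rightarrow> nat set \<times> (nat \<Rightarrow> nat)" where
  "drop_last z = (fst z - {n}, Transposition.transpose n (snd z n) \<circ> snd z)"

lemma drop_last_mem:
  assumes m: "(T, \<sigma>) \<in> chord_terms en_ab P"
  shows "drop_last (T, \<sigma>) \<in> chord_terms en merged"
proof -
  have perm: "\<sigma> permutes {..<Suc n}" and T: "T \<subseteq> {..<Suc n}"
    and chords: "\<And>i. i < Suc n \<Longrightarrow> {uend en_ab T i, vend en_ab T (\<sigma> i)} \<in> P"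
    using m by (auto simp: chord_terms_iff)
  define k where "k = \<sigma> n"
  define i where "i = inv \<sigma> n"
  note last = chord_terms_last[OF m, folded k_def i_def]
  define \<sigma>' where "\<sigma>' = Transposition.transpose n k \<circ> \<sigma>"
  have perm_Suc: "\<sigma>' permutes {..<Suc n}"
    unfolding \<sigma>'_def using last(1) by (intro permutes_compose[OF perm] permutes_swap_id) auto
  have "\<sigma>' n = n" by (simp add: \<sigma>'_def k_def)
  then have perm': "\<sigma>' permutes {..<n}" by (intro permutes_superset[OF perm_Suc]) auto
  have "{uend en (T - {n}) j, vend en (T - {n}) (\<sigma>' j)} \<in> merged" if j: "j < n" for j
  proof (cases "j = i")
    case True
    then have "\<sigma>' j = k" using last(3) by (simp add: \<sigma>'_def)
    then show ?thesis
      using True last j by (cases "n \<in> T") (auto simp: merged_def uend_remove_other vend_remove_other insert_commute)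
  next
    case False
    have inj: "inj \<sigma>" using perm by (rule permutes_inj)
    have "\<sigma> j \<noteq> n" using False last(3) inj by (metis injD)
    moreover have "\<sigma> j \<noteq> k" using j inj by (metis injD k_def less_irrefl)
    ultimately have e: "\<sigma>' j = \<sigma> j" by (simp add: \<sigma>'_def)
    then have sj: "\<sigma> j < n" using permutes_lessThan[OF perm' j] by simp
    have c: "{uend en T j, vend en T (\<sigma> j)} \<in> P"
      using chords[of j] j uend_snoc[OF j] vend_snoc[OF sj] by simp
    have "a \<notin> {uend en T j, vend en T (\<sigma> j)}" "b \<notin> {uend en T j, vend en T (\<sigma> j)}"
      using uend_in_endpoints[OF j] vend_in_endpoints[OF sj] fresh by auto
    then show ?thesis
      using c e sj j by (auto simp: merged_def uend_remove_other vend_remove_other)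
  qed
  then show ?thesis using T perm' by (auto simp: chord_terms_iff drop_last_def \<sigma>'_def k_def)
qed

lemma last_in_iff:
  assumes "(T, \<sigma>) \<in> chord_terms en_ab P"
  shows "n \<in> T \<longleftrightarrow> x \<in> uend en (T - {n}) ` {..<n}"
proof
  assume "n \<in> T"
  then have "uend en (T - {n}) (inv \<sigma> n) = x"
    using chord_terms_last[OF assms] by (simp add: uend_remove_other)
  then show "x \<in> uend en (T - {n}) ` {..<n}" using chord_terms_last(2)[OF assms] by force
next
  assume "x \<in> uend en (T - {n}) ` {..<n}"
  then obtain j where j: "j < n" "x = uend en T j" by (auto simp: uend_remove_other)
  show "n \<in> T"
  proof (rule ccontr)
    assume "n \<notin> T"
    then have "vend en T (\<sigma> n) = x" using chord_terms_last[OF assms] by simp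
    then show False using uend_neq_vend[OF fresh(1) j(1) chord_terms_last(1)[OF assms]] j by metis
  qed
qed

lemma inj_on_drop_last: "inj_on drop_last (chord_terms en_ab P)"
proof (rule inj_onI)
  fix z1 z2 assume m1: "z1 \<in> chord_terms en_ab P" and m2: "z2 \<in> chord_terms en_ab P"
    and e: "drop_last z1 = drop_last z2"
  obtain T1 \<sigma>1 T2 \<sigma>2 where z: "z1 = (T1, \<sigma>1)" "z2 = (T2, \<sigma>2)" by (cases z1, cases z2)
  note m = m1[unfolded z(1)] m2[unfolded z(2)]
  have e1: "T1 - {n} = T2 - {n}"
    and e2: "Transposition.transpose n (\<sigma>1 n) \<circ> \<sigma>1 = Transposition.transpose n (\<sigma>2 n) \<circ> \<sigma>2"
    using e z by (simp_all add: drop_last_def)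
  have "n \<in> T1 \<longleftrightarrow> n \<in> T2" unfolding last_in_iff[OF m(1)] last_in_iff[OF m(2)] e1 ..
  then have T: "T1 = T2" using e1 by blast
  then have "vend en T1 (\<sigma>1 n) = vend en T1 (\<sigma>2 n)"
    using chord_terms_last(4)[OF m(1)] chord_terms_last(4)[OF m(2)] by simp
  then have k: "\<sigma>1 n = \<sigma>2 n"
    using vend_eq_iff[OF fresh(1) chord_terms_last(1)[OF m(1)] chord_terms_last(1)[OF m(2)]] by simp
  have "\<sigma>1 = Transposition.transpose n (\<sigma>1 n) \<circ> (Transposition.transpose n (\<sigma>1 n) \<circ> \<sigma>1)"
    by (simp add: fun_eq_iff)
  also have "\<dots> = \<sigma>2" using e2 k by (simp add: fun_eq_iff)
  finally show "z1 = z2" using z T by simp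
qed

lemma chord_terms_extend:
  assumes m: "(T', \<sigma>') \<in> chord_terms en merged"
    and j: "j < n" "{uend en T' j, vend en T' (\<sigma>' j)} = {x, y}"
  defines "T \<equiv> if uend en T' j = x then insert n T' else T'"
    and "\<sigma> \<equiv> Transposition.transpose n (\<sigma>' j) \<circ> \<sigma>'"
  shows "(T, \<sigma>) \<in> chord_terms en_ab P" and "drop_last (T, \<sigma>) = (T', \<sigma>')"
proof -
  have perm': "\<sigma>' permutes {..<n}" and T': "T' \<subseteq> {..<n}"
    and chords: "\<And>i. i < n \<Longrightarrow> {uend en T' i, vend en T' (\<sigma>' i)} \<in> merged"
    using m by (auto simp: chord_terms_iff)
  define k where "k = \<sigma>' j"
  have k: "k < n" using permutes_lessThan[OF perm' j(1)] by (simp add: k_def)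
  have ends: "if uend en T' j = x then vend en T' k = y else uend en T' j = y \<and> vend en T' k = x"
    using j(2) x_neq_y by (auto simp: k_def doubleton_eq_iff)
  have n_in_T: "n \<in> T \<longleftrightarrow> uend en T' j = x" using T' by (auto simp: T_def)
  have \<sigma>_n: "\<sigma> n = k" using perm' by (simp add: \<sigma>_def k_def permutes_not_in)
  have \<sigma>_j: "\<sigma> j = n" by (simp add: \<sigma>_def)
  have u: "uend en_ab T i = uend en T' i" and v: "vend en_ab T i = vend en T' i" if "i < n" for i
    using that by (simp_all add: T_def uend_snoc vend_snoc uend_insert_other vend_insert_other)
  have "\<sigma>' permutes {..<Suc n}" using perm' by (rule permutes_subset) auto
  moreover have "Transposition.transpose n (\<sigma>' j) permutes {..<Suc n}"
    using k by (intro permutes_swap_id) (auto simp: k_def)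
  ultimately have perm: "\<sigma> permutes {..<Suc n}" unfolding \<sigma>_def by (rule permutes_compose)
  have "{uend en_ab T i, vend en_ab T (\<sigma> i)} \<in> P" if i: "i < Suc n" for i
  proof -
    consider "i = n" | "i = j" | "i < n" "i \<noteq> j" using i by linarith
    then show ?thesis
    proof cases
      case 1
      then show ?thesis using \<sigma>_n v[OF k] ends n_in_T chord_a chord_b
        by (auto simp: uend_last split: if_splits)
    next
      case 2
      then show ?thesis using \<sigma>_j u[OF j(1)] ends n_in_T chord_a chord_b
        by (auto simp: vend_last insert_commute split: if_splits)
    next
      case 3
      have "\<sigma>' i \<noteq> \<sigma>' j" using 3 permutes_inj[OF perm'] by (metis injD)
      moreover have "\<sigma>' i \<noteq> n" using permutes_lessThan[OF perm' 3(1)] by simp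
      ultimately have \<sigma>_i: "\<sigma> i = \<sigma>' i" by (simp add: \<sigma>_def)
      have "{uend en T' i, vend en T' (\<sigma>' i)} \<noteq> {x, y}"
        using j(2) chord_eq_iff[OF fresh(1) perm' 3(1) j(1), of T'] 3(2) by metis
      then show ?thesis
        using chords[OF 3(1)] u[OF 3(1)] v permutes_lessThan[OF perm' 3(1)] \<sigma>_i by (auto simp: merged_def)
    qed
  qed
  then show "(T, \<sigma>) \<in> chord_terms en_ab P" using T' perm by (auto simp: chord_terms_iff T_def)
  have "T - {n} = T'" using T' by (auto simp: T_def)
  moreover have "Transposition.transpose n (\<sigma> n) \<circ> \<sigma> = \<sigma>'"
    using \<sigma>_n by (simp add: \<sigma>_def k_def fun_eq_iff)
  ultimately show "drop_last (T, \<sigma>) = (T', \<sigma>')" by (simp add: drop_last_def)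
qed

lemma drop_last_image: "drop_last ` chord_terms en_ab P = chord_terms en merged"
proof
  show "drop_last ` chord_terms en_ab P \<subseteq> chord_terms en merged"
    using drop_last_mem by auto
  show "chord_terms en merged \<subseteq> drop_last ` chord_terms en_ab P"
  proof
    fix z assume z: "z \<in> chord_terms en merged"
    obtain T' \<sigma>' where z': "z = (T', \<sigma>')" by (cases z)
    have perm': "\<sigma>' permutes {..<n}" using z z' by (auto simp: chord_terms_iff)
    obtain j where j: "j < n" "x \<in> {uend en T' j, vend en T' (\<sigma>' j)}"
      using endpoints_in_chord[OF perm' x_in_endpoints] .
    have "{uend en T' j, vend en T' (\<sigma>' j)} \<in> merged" "{x, y} \<in> merged"
      using z z' j(1) by (auto simp: chord_terms_iff merged_def)
    then have "{uend en T' j, vend en T' (\<sigma>' j)} = {x, y}"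
      using perfect_matching_unique[OF perfect_matching_merged] j(2) by blast
    then show "z \<in> drop_last ` chord_terms en_ab P"
      using chord_terms_extend[OF z[unfolded z'] j(1)] z' by (metis image_eqI)
  qed
qed

lemma sign_drop_last:
  assumes "z \<in> chord_terms en_ab P"
  shows "sign (snd (drop_last z)) = - sign (snd z)"
proof -
  obtain T \<sigma> where z: "z = (T, \<sigma>)" by (cases z)
  have perm: "\<sigma> permutes {..<Suc n}" using assms z by (simp add: chord_terms_iff)
  have k: "\<sigma> n < n" using chord_terms_last(1) assms z by simp
  then have "Transposition.transpose n (\<sigma> n) permutes {..<Suc n}" by (intro permutes_swap_id) auto
  then have "sign (Transposition.transpose n (\<sigma> n) \<circ> \<sigma>) = sign (Transposition.transpose n (\<sigma> n)) * sign \<sigma>"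
    using perm by (intro sign_compose) (auto intro: permutes_imp_permutation)
  also have "\<dots> = - sign \<sigma>" using k by (simp add: sign_swap_id)
  finally show ?thesis using z by (simp add: drop_last_def)
qed

lemma sum_sign_merge:
  "(\<Sum>z\<in>chord_terms en_ab P. real_of_int (sign (snd z)))
     = - (\<Sum>z\<in>chord_terms en merged. real_of_int (sign (snd z)))"
proof -
  have "(\<Sum>z\<in>chord_terms en merged. real_of_int (sign (snd z)))
      = (\<Sum>z\<in>chord_terms en_ab P. real_of_int (sign (snd (drop_last z))))"
    using sum.reindex[OF inj_on_drop_last] drop_last_image by (simp add: comp_def)
  also have "\<dots> = - (\<Sum>z\<in>chord_terms en_ab P. real_of_int (sign (snd z)))"
    by (simp add: sign_drop_last sum_negf)
  finally show ?thesis by simp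
qed

end

theorem sum_sign_chord_terms:
  assumes "distinct_endpoints en" "perfect_matching (endpoints en) P"
  shows "(\<Sum>z\<in>chord_terms en P. real_of_int (sign (snd z)))
       = chord_weight (length en) (c2 (endpoints en) P (pair_sets en))"
  using assms
proof (induction en arbitrary: P rule: rev_induct)
  case Nil
  then have "P = {}" using perfect_matching_subset perfect_matching_card
    by (fastforce simp: endpoints_def)
  then show ?case by (simp add: chord_terms_def c2_def endpoints_def chord_weight_def)
next
  case (snoc ab en)
  obtain a b where ab: "ab = (a, b)" by (cases ab)
  have distinct: "distinct_endpoints (en @ [(a, b)])"
    and matching: "perfect_matching (endpoints (en @ [(a, b)])) P"
    using snoc.prems ab by simp_all
  have distinct': "distinct_endpoints en" using distinct by (simp add: distinct_endpoints_snoc)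
  show ?case
  proof (cases "{a, b} \<in> P")
    case True
    then show ?thesis
      using sum_sign_snoc_chord[OF distinct matching True] c2_snoc_chord[OF distinct matching True]
        snoc.IH[OF distinct' perfect_matching_remove_chord[OF distinct matching True]] ab
      by (simp add: chord_weight_Suc_Suc)
  next
    case False
    obtain x y where "{a, x} \<in> P" "x \<noteq> a" "{b, y} \<in> P" "y \<noteq> b"
      using perfect_matching_partner[OF matching] by (metis endpoints_snoc insertI1 insertI2)
    then interpret chord_merge en a b x y P
      using distinct matching False by unfold_locales
    show ?thesis
      using sum_sign_merge c2_merged snoc.IH[OF distinct' perfect_matching_merged] ab
      by (simp add: chord_weight_Suc)
  qed
qed

subsection \<open>Grouping the expansion by chord diagrams\<close>

definition flip_det :: "('w \<times> 'w) list \<Rightarrow> ('w \<Rightarrow> 'w \<Rightarrow> real) \<Rightarrow> nat set \<Rightarrow> real" where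
  "flip_det en Y T = (\<Sum>\<sigma>\<in>{\<sigma>. \<sigma> permutes {..<length en}}.
      real_of_int (sign \<sigma>) * (\<Prod>i<length en. Y (uend en T i) (vend en T (\<sigma> i))))"

definition chord_diagram :: "('w \<times> 'w) list \<Rightarrow> nat set \<Rightarrow> (nat \<Rightarrow> nat) \<Rightarrow> 'w set set" where
  "chord_diagram en T \<sigma> = (\<lambda>i. {uend en T i, vend en T (\<sigma> i)}) ` {..<length en}"

text \<open>Flipping every position transposes the matrix, which for symmetric \<open>Y\<close> leaves the
  determinant unchanged.\<close>

lemma flip_det_complement:
  assumes sym: "\<And>x y. Y x y = Y y x"
  shows "flip_det en Y ({..<length en} - T) = flip_det en Y T"
proof -
  define L where "L = length en"
  define G where "G = (\<lambda>\<tau>. \<Prod>j<L. Y (uend en T j) (vend en T (\<tau> j)))"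
  have transposed: "(\<Prod>i<L. Y (uend en ({..<L} - T) i) (vend en ({..<L} - T) (\<sigma> i))) = G (inv \<sigma>)"
    if perm: "\<sigma> permutes {..<L}" for \<sigma>
  proof -
    have "(\<Prod>i<L. Y (uend en ({..<L} - T) i) (vend en ({..<L} - T) (\<sigma> i)))
        = (\<Prod>i<L. Y (vend en T i) (uend en T (\<sigma> i)))"
      using permutes_lessThan[OF perm] by (intro prod.cong) (simp_all add: uend_def vend_def)
    also have "\<dots> = (\<Prod>j<L. Y (vend en T (inv \<sigma> j)) (uend en T (\<sigma> (inv \<sigma> j))))"
      by (rule prod.reindex_bij_betw[OF permutes_imp_bij[OF permutes_inv[OF perm]],
          where g="\<lambda>i. Y (vend en T i) (uend en T (\<sigma> i))", symmetric])
    also have "\<dots> = G (inv \<sigma>)"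
      unfolding G_def by (intro prod.cong) (simp_all add: permutes_inverses(1)[OF perm] sym)
    finally show ?thesis .
  qed
  have "flip_det en Y ({..<L} - T) = (\<Sum>\<sigma>\<in>{\<sigma>. \<sigma> permutes {..<L}}. real_of_int (sign (inv \<sigma>)) * G (inv \<sigma>))"
    unfolding flip_det_def L_def[symmetric]
  proof (intro sum.cong refl)
    fix \<sigma> assume "\<sigma> \<in> {\<sigma>. \<sigma> permutes {..<L}}"
    then have perm: "\<sigma> permutes {..<L}" by simp
    then have "sign (inv \<sigma>) = sign \<sigma>" by (intro sign_inverse permutes_imp_permutation) auto
    then show "real_of_int (sign \<sigma>) * (\<Prod>i<L. Y (uend en ({..<L} - T) i) (vend en ({..<L} - T) (\<sigma> i)))
        = real_of_int (sign (inv \<sigma>)) * G (inv \<sigma>)"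
      using transposed[OF perm] by simp
  qed
  also have "\<dots> = (\<Sum>\<tau>\<in>{\<sigma>. \<sigma> permutes {..<L}}. real_of_int (sign \<tau>) * G \<tau>)"
    by (rule sum.reindex_bij_witness[where i=inv and j=inv])
      (auto simp: permutes_inv_inv permutes_inv)
  also have "\<dots> = flip_det en Y T" unfolding flip_det_def G_def L_def ..
  finally show ?thesis by (simp add: L_def)
qed

lemma perfect_matching_chord_diagram:
  assumes distinct: "distinct_endpoints en" and perm: "\<sigma> permutes {..<length en}"
  shows "perfect_matching (endpoints en) (chord_diagram en T \<sigma>)"
proof (rule perfect_matchingI)
  fix p assume "p \<in> chord_diagram en T \<sigma>"
  then obtain i where i: "i < length en" "p = {uend en T i, vend en T (\<sigma> i)}"
    by (auto simp: chord_diagram_def)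
  have "\<sigma> i < length en" using permutes_lessThan[OF perm i(1)] .
  then show "p \<subseteq> endpoints en" "card p = 2"
    using i uend_in_endpoints vend_in_endpoints uend_neq_vend[OF distinct i(1)] by auto
next
  fix w assume "w \<in> endpoints en"
  then show "\<exists>p\<in>chord_diagram en T \<sigma>. w \<in> p"
    by (auto simp: chord_diagram_def elim: endpoints_in_chord[OF perm])
next
  fix p q w assume pq: "p \<in> chord_diagram en T \<sigma>" "q \<in> chord_diagram en T \<sigma>" "w \<in> p" "w \<in> q"
  obtain i j where ij: "i < length en" "j < length en"
    "p = {uend en T i, vend en T (\<sigma> i)}" "q = {uend en T j, vend en T (\<sigma> j)}"
    using pq(1,2) by (auto simp: chord_diagram_def)
  have si: "\<sigma> i < length en" and sj: "\<sigma> j < length en" using permutes_lessThan[OF perm] ij by auto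
  have "w = uend en T i \<or> w = vend en T (\<sigma> i)" "w = uend en T j \<or> w = vend en T (\<sigma> j)"
    using pq(3,4) ij by auto
  then have "i = j \<or> \<sigma> i = \<sigma> j"
    using uend_eq_iff[OF distinct ij(1,2)] vend_eq_iff[OF distinct si sj]
      uend_neq_vend[OF distinct ij(1) sj] uend_neq_vend[OF distinct ij(2) si] by metis
  then have "i = j" using permutes_inj[OF perm] by (auto dest: injD)
  then show "p = q" using ij by simp
qed

lemma chord_diagram_eq_iff_chord_terms:
  assumes distinct: "distinct_endpoints en" and matching: "perfect_matching (endpoints en) P"
    and T: "T \<subseteq> {..<length en}" and perm: "\<sigma> permutes {..<length en}"
  shows "chord_diagram en T \<sigma> = P \<longleftrightarrow> (T, \<sigma>) \<in> chord_terms en P"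
proof
  assume "(T, \<sigma>) \<in> chord_terms en P"
  then have sub: "chord_diagram en T \<sigma> \<subseteq> P" by (auto simp: chord_terms_iff chord_diagram_def)
  have "P \<subseteq> chord_diagram en T \<sigma>"
  proof
    fix p assume p: "p \<in> P"
    then obtain w where "w \<in> p" using perfect_matching_card[OF matching p] by fastforce
    then obtain q where "q \<in> chord_diagram en T \<sigma>" "w \<in> q"
      using perfect_matching_subset[OF matching p]
        perfect_matching_cover[OF perfect_matching_chord_diagram[OF distinct perm]] by blast
    then show "p \<in> chord_diagram en T \<sigma>"
      using perfect_matching_unique[OF matching p] sub \<open>w \<in> p\<close> by blast
  qed
  then show "chord_diagram en T \<sigma> = P" using sub by blast
qed (use T perm in \<open>auto simp: chord_terms_iff chord_diagram_def\<close>)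

lemma prod_chord_diagram:
  assumes distinct: "distinct_endpoints en" and perm: "\<sigma> permutes {..<length en}"
    and chord_value: "\<And>x y. x \<noteq> y \<Longrightarrow> f {x, y} = Y x y"
  shows "(\<Prod>p\<in>chord_diagram en T \<sigma>. f p) = (\<Prod>i<length en. Y (uend en T i) (vend en T (\<sigma> i)))"
proof -
  have "inj_on (\<lambda>i. {uend en T i, vend en T (\<sigma> i)}) {..<length en}"
    using chord_eq_iff[OF distinct perm] by (auto intro: inj_onI)
  then have "(\<Prod>p\<in>chord_diagram en T \<sigma>. f p) = (\<Prod>i<length en. f {uend en T i, vend en T (\<sigma> i)})"
    unfolding chord_diagram_def by (simp add: prod.reindex)
  also have "\<dots> = (\<Prod>i<length en. Y (uend en T i) (vend en T (\<sigma> i)))"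
    using uend_neq_vend[OF distinct] permutes_lessThan[OF perm] by (intro prod.cong) (auto intro: chord_value)
  finally show ?thesis .
qed

lemma chord_terms_eq_fibre:
  assumes "distinct_endpoints en" and "perfect_matching (endpoints en) P"
  shows "{z \<in> Pow {..<length en} \<times> {\<sigma>. \<sigma> permutes {..<length en}}. (\<lambda>(T, \<sigma>). chord_diagram en T \<sigma>) z = P}
       = chord_terms en P"
proof (intro set_eqI)
  fix z :: "nat set \<times> (nat \<Rightarrow> nat)"
  obtain T \<sigma> where z: "z = (T, \<sigma>)" by (cases z)
  show "z \<in> {z \<in> Pow {..<length en} \<times> {\<sigma>. \<sigma> permutes {..<length en}}. (\<lambda>(T, \<sigma>). chord_diagram en T \<sigma>) z = P}
      \<longleftrightarrow> z \<in> chord_terms en P"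
    using chord_diagram_eq_iff_chord_terms[OF assms, of T \<sigma>] unfolding z chord_terms_def by blast
qed

theorem sum_flip_det:
  assumes distinct: "distinct_endpoints en"
    and chord_value: "\<And>x y. x \<noteq> y \<Longrightarrow> f {x, y} = Y x y"
  shows "(\<Sum>T\<in>Pow {..<length en}. flip_det en Y T)
       = (\<Sum>P\<in>{P. perfect_matching (endpoints en) P}.
            chord_weight (length en) (c2 (endpoints en) P (pair_sets en)) * (\<Prod>p\<in>P. f p))"
proof -
  define \<Omega> where "\<Omega> = Pow {..<length en} \<times> {\<sigma>. \<sigma> permutes {..<length en}}"
  define h where "h = (\<lambda>(T, \<sigma>). real_of_int (sign \<sigma>) * (\<Prod>p\<in>chord_diagram en T \<sigma>. f p))"
  have "(\<Sum>T\<in>Pow {..<length en}. flip_det en Y T) = (\<Sum>z\<in>\<Omega>. h z)"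
    unfolding flip_det_def \<Omega>_def h_def sum.cartesian_product
    by (intro sum.cong) (auto simp: prod_chord_diagram[where f=f and Y=Y, OF distinct _ chord_value])
  also have "\<dots> = (\<Sum>P\<in>{P. perfect_matching (endpoints en) P}.
      \<Sum>z\<in>{z \<in> \<Omega>. (\<lambda>(T, \<sigma>). chord_diagram en T \<sigma>) z = P}. h z)"
    by (rule sum.group[symmetric])
      (auto simp: \<Omega>_def finite_permutations perfect_matching_finite finite_endpoints
        perfect_matching_chord_diagram[OF distinct])
  also have "\<dots> = (\<Sum>P\<in>{P. perfect_matching (endpoints en) P}.
      (\<Sum>z\<in>chord_terms en P. real_of_int (sign (snd z))) * (\<Prod>p\<in>P. f p))"
  proof (intro sum.cong refl)
    fix P assume "P \<in> {P. perfect_matching (endpoints en) P}"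
    then have fibre: "{z \<in> \<Omega>. (\<lambda>(T, \<sigma>). chord_diagram en T \<sigma>) z = P} = chord_terms en P"
      unfolding \<Omega>_def using chord_terms_eq_fibre[OF distinct] by simp
    have "(\<Sum>z\<in>{z \<in> \<Omega>. (\<lambda>(T, \<sigma>). chord_diagram en T \<sigma>) z = P}. h z)
        = (\<Sum>z\<in>{z \<in> \<Omega>. (\<lambda>(T, \<sigma>). chord_diagram en T \<sigma>) z = P}. real_of_int (sign (snd z)) * (\<Prod>p\<in>P. f p))"
      by (intro sum.cong refl) (auto simp: h_def)
    then show "(\<Sum>z\<in>{z \<in> \<Omega>. (\<lambda>(T, \<sigma>). chord_diagram en T \<sigma>) z = P}. h z)
        = (\<Sum>z\<in>chord_terms en P. real_of_int (sign (snd z))) * (\<Prod>p\<in>P. f p)"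
      by (simp add: fibre sum_distrib_right)
  qed
  also have "\<dots> = (\<Sum>P\<in>{P. perfect_matching (endpoints en) P}.
      chord_weight (length en) (c2 (endpoints en) P (pair_sets en)) * (\<Prod>p\<in>P. f p))"
    by (simp add: sum_sign_chord_terms[OF distinct])
  finally show ?thesis .
qed

subsection \<open>Splits as flip sets\<close>

definition flip_set :: "('w \<times> 'w) list \<Rightarrow> nat set \<Rightarrow> 'w set" where
  "flip_set en T = uend en T ` {..<length en}"

definition flips_of :: "('w \<times> 'w) list \<Rightarrow> 'w set \<Rightarrow> nat set" where
  "flips_of en U = {i. i < length en \<and> snd (en ! i) \<in> U}"

definition transversal :: "('w \<times> 'w) list \<Rightarrow> 'w set \<Rightarrow> bool" where
  "transversal en U \<longleftrightarrow> U \<subseteq> endpoints en \<and> (\<forall>i<length en. (fst (en ! i) \<in> U) \<noteq> (snd (en ! i) \<in> U))"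

definition split_of :: "('w \<times> 'w) list \<Rightarrow> nat set \<Rightarrow> 'w set set" where
  "split_of en T = {flip_set en T, endpoints en - flip_set en T}"

lemma transversal_flip_set:
  assumes "distinct_endpoints en"
  shows "transversal en (flip_set en T)"
  unfolding transversal_def
proof (intro conjI allI impI)
  show "flip_set en T \<subseteq> endpoints en" using uend_in_endpoints by (auto simp: flip_set_def)
  fix i assume i: "i < length en"
  have "uend en T i \<in> flip_set en T" using i by (auto simp: flip_set_def)
  moreover have "vend en T i \<notin> flip_set en T"
    unfolding flip_set_def using uend_neq_vend[OF assms _ i, of _ T] by (metis imageE lessThan_iff)
  ultimately show "(fst (en ! i) \<in> flip_set en T) \<noteq> (snd (en ! i) \<in> flip_set en T)"
    by (auto simp: uend_def vend_def split: if_splits)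
qed

lemma flips_of_flip_set:
  assumes distinct: "distinct_endpoints en" and T: "T \<subseteq> {..<length en}"
  shows "flips_of en (flip_set en T) = T"
proof -
  have "snd (en ! i) \<in> flip_set en T \<longleftrightarrow> i \<in> T" if i: "i < length en" for i
  proof -
    have "snd (en ! i) = uend en T j \<longleftrightarrow> j = i \<and> i \<in> T" if "j < length en" for j
      using distinct_endpointsD[OF distinct i that] distinct_endpointsD(3)[OF distinct that i]
      by (auto simp: uend_def)
    then show ?thesis using i by (auto simp: flip_set_def)
  qed
  then show ?thesis using T by (auto simp: flips_of_def)
qed

lemma flip_set_flips_of:
  assumes "transversal en U"
  shows "flip_set en (flips_of en U) = U"
proof (intro equalityI subsetI)
  fix w assume "w \<in> flip_set en (flips_of en U)"
  then show "w \<in> U" using assms by (auto simp: flip_set_def uend_def flips_of_def transversal_def)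
next
  fix w assume w: "w \<in> U"
  then obtain i where i: "i < length en" "w = uend en (flips_of en U) i \<or> w = vend en (flips_of en U) i"
    using assms endpoints_uend_vend by (metis subsetD transversal_def)
  have "w = uend en (flips_of en U) i"
    using i w assms by (auto simp: uend_def vend_def flips_of_def transversal_def split: if_splits)
  then show "w \<in> flip_set en (flips_of en U)" using i(1) by (auto simp: flip_set_def)
qed

lemma transversal_Diff: "transversal en U \<Longrightarrow> transversal en (endpoints en - U)"
  by (force simp: transversal_def endpoints_def)

lemma flips_of_Diff:
  "transversal en U \<Longrightarrow> flips_of en (endpoints en - U) = {..<length en} - flips_of en U"
  by (force simp: transversal_def flips_of_def endpoints_def)

lemma flip_set_eq_iff:
  assumes "distinct_endpoints en" "transversal en U" "T \<subseteq> {..<length en}"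
  shows "flip_set en T = U \<longleftrightarrow> T = flips_of en U"
  using flips_of_flip_set[OF assms(1,3)] flip_set_flips_of[OF assms(2)] by auto

lemma card_flip_set:
  assumes "distinct_endpoints en"
  shows "card (flip_set en T) = length en"
  unfolding flip_set_def using uend_eq_iff[OF assms]
  by (subst card_image) (auto intro: inj_onI)

lemma transversal_iff_card_Int:
  assumes distinct: "distinct_endpoints en" and U: "U \<subseteq> endpoints en"
  shows "transversal en U \<longleftrightarrow> (\<forall>p\<in>pair_sets en. card (p \<inter> U) = 1)"
proof -
  have "(fst (en ! i) \<in> U) \<noteq> (snd (en ! i) \<in> U) \<longleftrightarrow> card ({fst (en ! i), snd (en ! i)} \<inter> U) = 1"
    if "i < length en" for i
    using distinct_endpointsD(3)[OF distinct that that]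
    by (cases "fst (en ! i) \<in> U"; cases "snd (en ! i) \<in> U") auto
  then show ?thesis using U unfolding transversal_def pair_sets_conv_nth by auto
qed

lemma split_of_in_splits:
  assumes "distinct_endpoints en"
  shows "split_of en T \<in> splits (endpoints en) (pair_sets en) (length en)"
proof -
  let ?U = "flip_set en T" and ?W = "endpoints en"
  have tr: "transversal en ?U" "transversal en (?W - ?U)"
    using transversal_flip_set[OF assms] transversal_Diff by blast+
  then have "?U \<subseteq> ?W" unfolding transversal_def by blast
  then have "card (?W - ?U) = length en"
    using card_Diff_subset[OF finite_subset[OF _ finite_endpoints] \<open>?U \<subseteq> ?W\<close>] card_endpoints[OF assms]
      card_flip_set[OF assms] by simp
  moreover have "\<forall>p\<in>pair_sets en. card (p \<inter> ?U) = 1 \<and> card (p \<inter> (?W - ?U)) = 1"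
    using tr transversal_iff_card_Int[OF assms \<open>?U \<subseteq> ?W\<close>]
      transversal_iff_card_Int[OF assms Diff_subset[of ?W ?U]] by blast
  ultimately show ?thesis
    unfolding splits_def split_of_def
    by (intro CollectI exI[of _ ?U] exI[of _ "?W - ?U"])
      (use \<open>?U \<subseteq> ?W\<close> card_flip_set[OF assms] in auto)
qed

lemma splits_memD:
  assumes distinct: "distinct_endpoints en"
    and S: "S \<in> splits (endpoints en) (pair_sets en) (length en)" and U: "U \<in> S"
  shows "transversal en U" "S = {U, endpoints en - U}"
proof -
  obtain U1 U2 where S': "S = {U1, U2}" "U1 \<inter> U2 = {}" "U1 \<union> U2 = endpoints en"
    and c: "\<forall>p\<in>pair_sets en. card (p \<inter> U1) = 1 \<and> card (p \<inter> U2) = 1"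
    using S unfolding splits_def by (auto simp only: mem_Collect_eq)
  have "U = U1 \<or> U = U2" using U S'(1) by blast
  then show "S = {U, endpoints en - U}" using S' by blast
  show "transversal en U"
    using \<open>U = U1 \<or> U = U2\<close> S'(3) c transversal_iff_card_Int[OF distinct] by blast
qed

lemma some_in_split:
  assumes "S \<in> splits W M N"
  shows "(SOME U. U \<in> S) \<in> S"
proof -
  obtain U U' where "S = {U, U'}" using assms unfolding splits_def by (auto simp only: mem_Collect_eq)
  then show ?thesis by (metis insertI1 someI)
qed

lemma complement_pair_eq_iff:
  assumes "A \<subseteq> W" "U \<subseteq> W"
  shows "{A, W - A} = {U, W - U} \<longleftrightarrow> A = U \<or> A = W - U"
proof
  assume "{A, W - A} = {U, W - U}"
  then show "A = U \<or> A = W - U" unfolding doubleton_eq_iff by blast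
next
  have "W - (W - U) = U" using assms(2) by (rule double_diff) simp
  moreover assume "A = U \<or> A = W - U"
  ultimately show "{A, W - A} = {U, W - U}" by (auto simp: insert_commute)
qed

lemma split_of_fibre:
  assumes distinct: "distinct_endpoints en"
    and S: "S \<in> splits (endpoints en) (pair_sets en) (length en)" and U: "U \<in> S"
  shows "{T \<in> Pow {..<length en}. split_of en T = S} = {flips_of en U, {..<length en} - flips_of en U}"
proof -
  note tr = splits_memD[OF distinct S U]
  have U_sub: "U \<subseteq> endpoints en" using tr(1) unfolding transversal_def by blast
  have iff: "split_of en T = S \<longleftrightarrow> T = flips_of en U \<or> T = {..<length en} - flips_of en U"
    if T: "T \<subseteq> {..<length en}" for T
  proof -
    have "flip_set en T \<subseteq> endpoints en"
      using transversal_flip_set[OF distinct, of T] unfolding transversal_def by blast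
    then have "split_of en T = S \<longleftrightarrow> flip_set en T = U \<or> flip_set en T = endpoints en - U"
      unfolding tr(2) split_of_def by (rule complement_pair_eq_iff[OF _ U_sub])
    then show ?thesis
      using flip_set_eq_iff[OF distinct tr(1) T] flip_set_eq_iff[OF distinct transversal_Diff[OF tr(1)] T]
        flips_of_Diff[OF tr(1)] by simp
  qed
  have sub: "flips_of en U \<subseteq> {..<length en}" by (auto simp: flips_of_def)
  show ?thesis
  proof (intro equalityI subsetI)
    fix T assume "T \<in> {T \<in> Pow {..<length en}. split_of en T = S}"
    then show "T \<in> {flips_of en U, {..<length en} - flips_of en U}" using iff by auto
  next
    fix T assume T: "T \<in> {flips_of en U, {..<length en} - flips_of en U}"
    then have "T \<subseteq> {..<length en}" using sub by auto
    moreover have "split_of en T = S" using iff[OF \<open>T \<subseteq> {..<length en}\<close>] T by blast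
    ultimately show "T \<in> {T \<in> Pow {..<length en}. split_of en T = S}" by simp
  qed
qed

text \<open>Each split arises from exactly two flip sets, complementary to each other.\<close>

lemma sum_Pow_eq_sum_splits:
  fixes f :: "nat set \<Rightarrow> 'a::semiring_1"
  assumes distinct: "distinct_endpoints en" and nonempty: "en \<noteq> []"
    and complement: "\<And>T. f ({..<length en} - T) = f T"
  shows "(\<Sum>T\<in>Pow {..<length en}. f T)
       = 2 * (\<Sum>S\<in>splits (endpoints en) (pair_sets en) (length en). f (flips_of en (SOME U. U \<in> S)))"
proof -
  let ?S = "splits (endpoints en) (pair_sets en) (length en)"
  have "finite ?S"
    by (rule finite_subset[of _ "Pow (Pow (endpoints en))"]) (auto simp: splits_def finite_endpoints)
  then have "(\<Sum>T\<in>Pow {..<length en}. f T) = (\<Sum>S\<in>?S. \<Sum>T\<in>{T \<in> Pow {..<length en}. split_of en T = S}. f T)"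
    by (intro sum.group[symmetric]) (auto simp: split_of_in_splits[OF distinct])
  also have "\<dots> = (\<Sum>S\<in>?S. 2 * f (flips_of en (SOME U. U \<in> S)))"
  proof (intro sum.cong refl)
    fix S assume S: "S \<in> ?S"
    define F where "F = flips_of en (SOME U. U \<in> S)"
    have "F \<noteq> {..<length en} - F" using nonempty by auto
    then show "(\<Sum>T\<in>{T \<in> Pow {..<length en}. split_of en T = S}. f T) = 2 * f F"
      using split_of_fibre[OF distinct S some_in_split[OF S]] complement by (simp add: F_def mult_2)
  qed
  finally show ?thesis by (simp add: sum_distrib_left)
qed

theorem sum_splits_flip_det:
  assumes distinct: "distinct_endpoints en" and nonempty: "en \<noteq> []"
    and sym: "\<And>x y. Y x y = Y y x" and chord_value: "\<And>x y. x \<noteq> y \<Longrightarrow> f {x, y} = Y x y"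
  shows "(\<Sum>S\<in>splits (endpoints en) (pair_sets en) (length en). flip_det en Y (flips_of en (SOME U. U \<in> S)))
       = (-1) powi (int (length en) - 1) *
         (\<Sum>P\<in>{P. perfect_matching (endpoints en) P}.
            (-2) powi (int (c2 (endpoints en) P (pair_sets en)) - 1) * (\<Prod>p\<in>P. f p))"
proof -
  let ?c = "\<lambda>P. c2 (endpoints en) P (pair_sets en)"
  have "(\<Sum>T\<in>Pow {..<length en}. flip_det en Y T)
      = 2 * (\<Sum>S\<in>splits (endpoints en) (pair_sets en) (length en). flip_det en Y (flips_of en (SOME U. U \<in> S)))"
    by (rule sum_Pow_eq_sum_splits[where f="flip_det en Y", OF distinct nonempty flip_det_complement[OF sym]])
  moreover have "(\<Sum>T\<in>Pow {..<length en}. flip_det en Y T)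
      = (\<Sum>P\<in>{P. perfect_matching (endpoints en) P}. chord_weight (length en) (?c P) * (\<Prod>p\<in>P. f p))"
    by (rule sum_flip_det[where f=f and Y=Y, OF distinct chord_value])
  moreover have "\<dots> = 2 * ((-1) powi (int (length en) - 1) *
          (\<Sum>P\<in>{P. perfect_matching (endpoints en) P}. (-2) powi (int (?c P) - 1) * (\<Prod>p\<in>P. f p)))"
    unfolding sum_distrib_left by (intro sum.cong refl) (simp only: chord_weight_def mult.assoc)
  ultimately show ?thesis by linarith
qed

subsection \<open>The graph polynomials\<close>

lemma cycpoly_commute: "cycpoly V E ends \<alpha> e f = cycpoly V E ends \<alpha> f e"
  unfolding cycpoly_def by (simp add: mult.commute)

lemma chord_chi_doubleton:
  assumes "x \<noteq> y"
  shows "chord_chi V E ends \<alpha> lab {x, y} = cycpoly V E ends \<alpha> (lab x) (lab y)"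
proof -
  define ab where "ab = (SOME ab. {x, y} = {fst ab, snd ab} \<and> fst ab \<noteq> snd ab)"
  have "{x, y} = {fst ab, snd ab} \<and> fst ab \<noteq> snd ab"
    unfolding ab_def by (rule someI[of _ "(x, y)"]) (simp add: assms)
  then have "ab = (x, y) \<or> ab = (y, x)" by (auto simp: doubleton_eq_iff prod_eq_iff)
  then show ?thesis
    unfolding chord_chi_def ab_def[symmetric] Let_def using cycpoly_commute by auto
qed

lemma nth_rep_words:
  assumes "transversal en U" "i < length en"
  shows "map (\<lambda>(a, b). if a \<in> U then lab a else lab b) en ! i = lab (uend en (flips_of en U) i)"
    and "map (\<lambda>(a, b). if a \<in> U then lab b else lab a) en ! i = lab (vend en (flips_of en U) i)"
  using assms by (auto simp: transversal_def flips_of_def uend_def vend_def case_prod_beta)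

lemma dodgson_rep_eq_flip_det:
  assumes distinct: "distinct_endpoints en"
    and S: "S \<in> splits (endpoints en) (pair_sets en) (length en)"
  shows "dodgson V E ends \<alpha> (rep_u lab en S) (rep_v lab en S)
       = kirchhoff V E ends \<alpha> powi (1 - int (length en)) *
         flip_det en (\<lambda>x y. cycpoly V E ends \<alpha> (lab x) (lab y)) (flips_of en (SOME U. U \<in> S))"
proof -
  define U where "U = (SOME U. U \<in> S)"
  have U: "transversal en U" using splits_memD(1)[OF distinct S some_in_split[OF S]] by (simp add: U_def)
  have words: "rep_u lab en S ! i = lab (uend en (flips_of en U) i)"
    "rep_v lab en S ! \<sigma> i = lab (vend en (flips_of en U) (\<sigma> i))"
    if "\<sigma> permutes {..<length en}" "i < length en" for \<sigma> i
    using nth_rep_words[OF U that(2)] nth_rep_words[OF U permutes_lessThan[OF that]]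
    by (simp_all add: rep_u_def rep_v_def U_def)
  have len: "length (rep_u lab en S) = length en" by (simp add: rep_u_def Let_def)
  show ?thesis
    unfolding dodgson_def flip_det_def len U_def[symmetric]
    by (intro arg_cong2[where f="(*)"] refl sum.cong prod.cong) (simp_all add: words)
qed

lemma enumeration_of_matching:
  assumes matching: "perfect_matching W M"
    and distinct: "distinct (map (\<lambda>(a, b). {a, b}) en)" and enum: "set (map (\<lambda>(a, b). {a, b}) en) = M"
  shows "distinct_endpoints en" "endpoints en = W" "pair_sets en = M"
proof -
  show "pair_sets en = M" using enum by (simp add: pair_sets_def)
  have M_conv: "M = (\<lambda>p. {fst p, snd p}) ` set en" using enum by (auto simp: case_prod_beta)
  have inj: "inj_on (\<lambda>p. {fst p, snd p}) (set en)"
    using distinct by (simp add: distinct_map split_def)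
  have share: "p = q" if "p \<in> set en" "q \<in> set en" "w \<in> {fst p, snd p}" "w \<in> {fst q, snd q}" for p q w
    using perfect_matching_unique[OF matching _ _ that(3,4)] M_conv that(1,2) inj_onD[OF inj _ that(1,2)]
    by blast
  have ne: "fst p \<noteq> snd p" if "p \<in> set en" for p
    using perfect_matching_card[OF matching, of "{fst p, snd p}"] M_conv that
    by (cases "fst p = snd p") auto
  have "inj_on fst (set en)" "inj_on snd (set en)" by (auto intro!: inj_onI dest: share)
  moreover have "fst ` set en \<inter> snd ` set en = {}"
  proof (rule ccontr)
    assume "fst ` set en \<inter> snd ` set en \<noteq> {}"
    then obtain p q where "p \<in> set en" "q \<in> set en" "fst p = snd q" by auto
    then show False using share[of p q "fst p"] ne by auto
  qed
  moreover have "distinct en" using distinct by (simp add: distinct_map)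
  ultimately show "distinct_endpoints en" by (simp add: distinct_endpoints_def distinct_map)
  have "endpoints en = \<Union>M" by (auto simp: M_conv endpoints_def)
  also have "\<Union>M = W"
    using perfect_matching_subset[OF matching] perfect_matching_cover[OF matching] by blast
  finally show "endpoints en = W" .
qed

lemma minus_power_int_one_minus:
  fixes x :: real
  shows "(- x) powi (1 - int n) = (-1) powi (int n - 1) * x powi (1 - int n)"
proof -
  have "(- x) powi (1 - int n) = (-1) powi (1 - int n) * x powi (1 - int n)"
    using power_int_mult_distrib[of "-1" x] by simp
  also have "(-1::real) powi (1 - int n) = (-1) powi (int n - 1)"
    by (rule power_int_minus_one_diff_commute)
  finally show ?thesis .
qed

theorem mainTheorem3:
  fixes V :: "'v set" and E :: "'e set" and ends :: "'e \<Rightarrow> 'v \<times> 'v"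
    and W :: "'w set" and lab :: "'w \<Rightarrow> 'e" and B1 B2 :: "'w set set"
    and j :: nat and enum :: "('w \<times> 'w) list" and \<alpha> :: "'e \<Rightarrow> real" and N :: nat
  assumes "finite V" and "finite E"
    and "\<forall>e\<in>E. fst (ends e) \<in> V \<and> snd (ends e) \<in> V"
    and "graph_connected V E ends"
    and "N = betti1 V E ends" and "N \<ge> 1"
    and "finite W" and "card W = 2 * N"
    and "perfect_matching W B1" and "perfect_matching W B2"
    and "inj_on lab W" and "lab ` W \<subseteq> E"
    and "j \<in> {1, 2}"
    and "length enum = N"
    and "distinct (map (\<lambda>(a, b). {a, b}) enum)"
    and "set (map (\<lambda>(a, b). {a, b}) enum) = (if j = 1 then B1 else B2)"
  shows "(\<Sum>S\<in>splits W (if j = 1 then B1 else B2) N.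
            dodgson V E ends \<alpha> (rep_u lab enum S) (rep_v lab enum S))
       = (- kirchhoff V E ends \<alpha>) powi (1 - int N) *
         (\<Sum>P\<in>{P. perfect_matching W P}.
            (-2) powi (int (c2 W P (if j = 1 then B1 else B2)) - 1) *
            (\<Prod>p\<in>P. chord_chi V E ends \<alpha> lab p))"
proof -
  define M where "M = (if j = 1 then B1 else B2)"
  have "perfect_matching W M" using assms(9,10) by (simp add: M_def)
  note enum = enumeration_of_matching[OF this assms(15) assms(16)[folded M_def]]
  define Y where "Y = (\<lambda>x y. cycpoly V E ends \<alpha> (lab x) (lab y))"
  have "enum \<noteq> []" using assms(6,14) by auto
  have flip: "(\<Sum>S\<in>splits W M N. flip_det enum Y (flips_of enum (SOME U. U \<in> S)))
      = (-1) powi (int N - 1) *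
        (\<Sum>P\<in>{P. perfect_matching W P}. (-2) powi (int (c2 W P M) - 1) * (\<Prod>p\<in>P. chord_chi V E ends \<alpha> lab p))"
    using sum_splits_flip_det[OF enum(1) \<open>enum \<noteq> []\<close>, where Y=Y and f="chord_chi V E ends \<alpha> lab"]
    unfolding enum(2,3) assms(14) by (simp add: Y_def cycpoly_commute chord_chi_doubleton)
  have "(\<Sum>S\<in>splits W M N. dodgson V E ends \<alpha> (rep_u lab enum S) (rep_v lab enum S))
      = kirchhoff V E ends \<alpha> powi (1 - int N) *
        (\<Sum>S\<in>splits W M N. flip_det enum Y (flips_of enum (SOME U. U \<in> S)))"
    unfolding sum_distrib_left Y_def
    by (intro sum.cong refl) (use dodgson_rep_eq_flip_det[OF enum(1)] enum(2,3) assms(14) in simp)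
  also have "\<dots> = (- kirchhoff V E ends \<alpha>) powi (1 - int N) *
        (\<Sum>P\<in>{P. perfect_matching W P}. (-2) powi (int (c2 W P M) - 1) * (\<Prod>p\<in>P. chord_chi V E ends \<alpha> lab p))"
    by (simp add: flip minus_power_int_one_minus)
  finally show ?thesis by (simp add: M_def)
qed

end
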